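(* Let $v_1,\ldots,v_r\in\mathbb{Z}^n$ with $\sum_i v_i=0$ and $\mathbf{a}\in\mathbb{Z}^r$ be such that $P=\bigcap_i\{x:\langle v_i,x\rangle+a_i\ge0\}$ is compact and each hyperplane $\{\langle v_i,x\rangle+a_i=0\}$ meets $P$. Let $0<c<\frac16$. Then there are constants $d_k>0$ such that, with \[ \rho_k=\frac{1}{d_k}\sum_{x\in B_{k^c}(0)\cap L\cap\frac{\mathbb{Z}^n-km_{\mathbf{a}}}{\sqrt{k}}} e^{-\frac12\sum_{i\in I_{\mathbf{a}}}\frac{\langle v_i,x\rangle^2}{\langle v_i,m_{\mathbf{a}}\rangle+a_i}}\,\delta_x, \] one has $\lim_{k\to\infty}\nu'_k=\lim_{k\to\infty}\rho_k$, in the sense that $\lim_{k\to\infty}\left(\int f\,d\nu'_k-\int f\,d\rho_k\right)=0$ for every bounded continuous $f:\mathbb{R}^n\to\mathbb{R}$.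
   Context: $\delta_x$ is the Dirac probability measure at $x$; $B_{k^c}(0)$ is the ball of radius $k^c$ about $0$; $\frac{\mathbb{Z}^n-km_{\mathbf{a}}}{\sqrt k}=\{(z-km_{\mathbf{a}})/\sqrt{k}: z\in\mathbb{Z}^n\}$. $L$ is the linear span of differences of points of $P$; $I_{\mathbf{a}}$ is the set of $i$ for which $\langle v_i,\cdot\rangle$ is not constant on $P$; $\phi_{\mathbf{a}}(x)=\prod_i(\langle v_i,x\rangle+a_i)^{\langle v_i,x\rangle+a_i}$ on $P$ (with $0^0=1$) and $m_{\mathbf{a}}$ is its unique minimizer on $P$, lying in the relative interior of $P$. $\mathbf{X}_{k\mathbf{a}}$ is the random vector on $kP\cap\mathbb{Z}^n$ with $\mathbb{P}(\mathbf{X}_{k\mathbf{a}}=x)$ proportional to the multinomial coefficient $\binom{k\sum_i a_i}{\langle v_1,x\rangle+ka_1,\ldots,\langle v_r,x\rangle+ka_r}$, and $\nu'_k$ is the distribution of $(\mathbf{X}_{k\mathbf{a}}-km_{\mathbf{a}})/\sqrt{k}$. *)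

theory Defs
  imports "HOL-Analysis.Analysis"
begin

definition vr :: "int ^ 'n::finite \<Rightarrow> real ^ 'n" where
  "vr z = (\<chi> j. real_of_int (z $ j))"

definition polyP :: "nat \<Rightarrow> (nat \<Rightarrow> int ^ 'n::finite) \<Rightarrow> (nat \<Rightarrow> int) \<Rightarrow> (real ^ 'n) set" where
  "polyP r v a = {x. \<forall>i<r. inner (vr (v i)) x + real_of_int (a i) \<ge> 0}"

definition selfpow :: "real \<Rightarrow> real" where
  "selfpow t = (if t = 0 then 1 else t powr t)"

definition phi_a :: "nat \<Rightarrow> (nat \<Rightarrow> int ^ 'n::finite) \<Rightarrow> (nat \<Rightarrow> int) \<Rightarrow> real ^ 'n \<Rightarrow> real" where
  "phi_a r v a x = (\<Prod>i<r. selfpow (inner (vr (v i)) x + real_of_int (a i)))"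

definition m_a :: "nat \<Rightarrow> (nat \<Rightarrow> int ^ 'n::finite) \<Rightarrow> (nat \<Rightarrow> int) \<Rightarrow> real ^ 'n" where
  "m_a r v a = (THE m. m \<in> polyP r v a \<and> (\<forall>x\<in>polyP r v a. phi_a r v a m \<le> phi_a r v a x))"

definition L_a :: "nat \<Rightarrow> (nat \<Rightarrow> int ^ 'n::finite) \<Rightarrow> (nat \<Rightarrow> int) \<Rightarrow> (real ^ 'n) set" where
  "L_a r v a = span {p - q | p q. p \<in> polyP r v a \<and> q \<in> polyP r v a}"

definition I_a :: "nat \<Rightarrow> (nat \<Rightarrow> int ^ 'n::finite) \<Rightarrow> (nat \<Rightarrow> int) \<Rightarrow> nat set" where
  "I_a r v a = {i. i < r \<and> \<not> (\<exists>c. \<forall>x\<in>polyP r v a. inner (vr (v i)) x = c)}"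

definition latt_kP :: "nat \<Rightarrow> (nat \<Rightarrow> int ^ 'n::finite) \<Rightarrow> (nat \<Rightarrow> int) \<Rightarrow> nat \<Rightarrow> (int ^ 'n) set" where
  "latt_kP r v a k = {z. vr z \<in> (\<lambda>x. real k *\<^sub>R x) ` polyP r v a}"

definition iinner :: "int ^ 'n::finite \<Rightarrow> int ^ 'n \<Rightarrow> int" where
  "iinner u z = (\<Sum>j\<in>UNIV. u $ j * z $ j)"

definition multinom :: "nat \<Rightarrow> nat \<Rightarrow> (nat \<Rightarrow> nat) \<Rightarrow> real" where
  "multinom N r ks = fact N / (\<Prod>i<r. fact (ks i))"

text \<open>Unnormalised weight P(X_{ka} = z) (proportional to it).\<close>
definition wt :: "nat \<Rightarrow> (nat \<Rightarrow> int ^ 'n::finite) \<Rightarrow> (nat \<Rightarrow> int) \<Rightarrow> nat \<Rightarrow> int ^ 'n \<Rightarrow> real" where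
  "wt r v a k z = multinom (nat (int k * (\<Sum>i<r. a i))) r
                    (\<lambda>i. nat (iinner (v i) z + int k * a i))"

text \<open>Integral of f against nu'_k, the law of (X_{ka} - k m_a)/sqrt k.\<close>
definition nu_int :: "nat \<Rightarrow> (nat \<Rightarrow> int ^ 'n::finite) \<Rightarrow> (nat \<Rightarrow> int) \<Rightarrow> nat
                      \<Rightarrow> (real ^ 'n \<Rightarrow> real) \<Rightarrow> real" where
  "nu_int r v a k f =
     (\<Sum>z\<in>latt_kP r v a k. wt r v a k z *
          f ((1 / sqrt (real k)) *\<^sub>R (vr z - real k *\<^sub>R m_a r v a)))
     / (\<Sum>z\<in>latt_kP r v a k. wt r v a k z)"

definition rho_supp :: "nat \<Rightarrow> (nat \<Rightarrow> int ^ 'n::finite) \<Rightarrow> (nat \<Rightarrow> int) \<Rightarrow> real \<Rightarrow> nat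
                        \<Rightarrow> (real ^ 'n) set" where
  "rho_supp r v a c k =
     ball 0 (real k powr c) \<inter> L_a r v a \<inter>
     {x. \<exists>z. x = (1 / sqrt (real k)) *\<^sub>R (vr z - real k *\<^sub>R m_a r v a)}"

definition gauss_wt :: "nat \<Rightarrow> (nat \<Rightarrow> int ^ 'n::finite) \<Rightarrow> (nat \<Rightarrow> int) \<Rightarrow> real ^ 'n \<Rightarrow> real" where
  "gauss_wt r v a x =
     exp (- (1/2) * (\<Sum>i\<in>I_a r v a.
        (inner (vr (v i)) x)^2 / (inner (vr (v i)) (m_a r v a) + real_of_int (a i))))"

definition rho_int :: "nat \<Rightarrow> (nat \<Rightarrow> int ^ 'n::finite) \<Rightarrow> (nat \<Rightarrow> int) \<Rightarrow> real \<Rightarrow> (nat \<Rightarrow> real)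
                       \<Rightarrow> nat \<Rightarrow> (real ^ 'n \<Rightarrow> real) \<Rightarrow> real" where
  "rho_int r v a c d k f =
     (1 / d k) * (\<Sum>x\<in>rho_supp r v a c k. gauss_wt r v a x * f x)"

end

theory Submission
  imports Defs "HOL-Real_Asymp.Real_Asymp"
begin

text \<open>
  Write \<open>t\<^sub>i(x) = \<langle>v\<^sub>i,x\<rangle> + a\<^sub>i\<close>. The weight of a lattice point \<open>z\<close> of \<open>kP\<close> is the
  multinomial coefficient \<open>N! / \<Prod>\<^sub>i T\<^sub>i!\<close> with \<open>T\<^sub>i = k t\<^sub>i(z/k)\<close>; the factors with
  \<open>i \<notin> I\<^sub>a\<close> are \<open>0! = 1\<close>. Expanding \<open>ln T!\<close> to second order around \<open>\<lambda>\<^sub>i = k t\<^sub>i(m\<^sub>a)\<close>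
  shows that on the ball \<open>|z - k m\<^sub>a| < k\<^sup>c\<^sup>+\<^sup>1\<^sup>/\<^sup>2\<close> the log-ratio of two weights equals the
  log-ratio of the Gaussian weights up to \<open>O(k\<^sup>3\<^sup>c\<^sup>-\<^sup>1\<^sup>/\<^sup>2)\<close>. The linear term of the expansion
  vanishes because \<open>m\<^sub>a\<close> is a stationary point of \<open>\<Sum>\<^sub>i t\<^sub>i ln t\<^sub>i\<close> on \<open>P\<close>, and the quadratic
  term is the Gaussian exponent. Outside the ball a cruder lower bound for \<open>ln T!\<close>, together
  with the positive definiteness of \<open>\<Sum>\<^sub>i\<^sub>\<in>\<^sub>I \<langle>v\<^sub>i,u\<rangle>\<^sup>2\<close> on \<open>L\<close>, shows that the weights are
  smaller than a central weight by a factor \<open>exp (-\<eta> k\<^sup>2\<^sup>c)\<close>, which beats the polynomial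
  number of lattice points. Central lattice points exist (for large \<open>k\<close>, whenever \<open>kP\<close>
  has a lattice point at all) because the lattice points in \<open>L\<close> are \<open>R\<close>-dense in \<open>L\<close>.
  Choosing \<open>d\<^sub>k\<close> as total weight times Gaussian weight over weight of such a
  central point, \<open>\<nu>'\<^sub>k - \<rho>\<^sub>k\<close> tends to \<open>0\<close> in total variation.
\<close>

lemma vr_add: "vr (z + w) = vr z + vr w"
  by (simp add: vr_def vec_eq_iff)

lemma vr_zero [simp]: "vr 0 = 0"
  by (simp add: vr_def vec_eq_iff)

lemma vr_sum: "vr (\<Sum>i\<in>S. f i) = (\<Sum>i\<in>S. vr (f i))"
  by (simp add: vr_def vec_eq_iff)

lemma vr_eq_iff: "vr z = vr w \<longleftrightarrow> z = w"
  by (simp add: vr_def vec_eq_iff)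

lemma vr_nth: "vr z $ j = real_of_int (z $ j)"
  by (simp add: vr_def)

lemma of_int_iinner: "real_of_int (iinner u z) = inner (vr u) (vr z)"
  by (simp add: iinner_def inner_vec_def vr_def)

lemma ln_less_minus_one: assumes "0 < (u::real)" "u \<noteq> 1" shows "ln u < u - 1"
proof -
  define q where "q = sqrt u"
  have q: "q > 0" "q \<noteq> 1" "u = q * q" using assms by (auto simp: q_def)
  have "ln u = 2 * ln q" using q by (simp add: ln_mult)
  also have "\<dots> \<le> 2 * (q - 1)" using ln_le_minus_one[OF q(1)] by simp
  also have "\<dots> < u - 1"
  proof -
    have "(q - 1)^2 > 0" using q by simp
    thus ?thesis using q by (simp add: power2_eq_square algebra_simps)
  qed
  finally show ?thesis .
qed

definition xlogx :: "real \<Rightarrow> real" where "xlogx t = t * ln t"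

lemma xlogx_above_tangent:
  assumes y: "y > 0" and x: "x \<ge> 0"
  shows "xlogx x \<ge> xlogx y + (ln y + 1) * (x - y)"
    and "x \<noteq> y \<Longrightarrow> xlogx x > xlogx y + (ln y + 1) * (x - y)"
proof -
  have gap: "xlogx x - xlogx y - (ln y + 1) * (x - y) = x * (ln (x / y) - (1 - y / x))"
    if "x > 0"
    using that y by (simp add: xlogx_def ln_div field_simps)
  have "ln (x / y) \<ge> 1 - y / x" if "x > 0"
    using ln_le_minus_one[of "y / x"] that y by (simp add: ln_div)
  hence weak: "xlogx x - xlogx y - (ln y + 1) * (x - y) \<ge> 0" if "x > 0"
    using gap that by simp
  have "ln (x / y) > 1 - y / x" if "x > 0" "x \<noteq> y"
    using ln_less_minus_one[of "y / x"] that y by (simp add: ln_div field_simps)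
  hence strict: "xlogx x - xlogx y - (ln y + 1) * (x - y) > 0" if "x > 0" "x \<noteq> y"
    using gap that by simp
  have at_0: "xlogx 0 - xlogx y - (ln y + 1) * 0 + (ln y + 1) * y = y"
    by (simp add: xlogx_def algebra_simps)
  show "xlogx x \<ge> xlogx y + (ln y + 1) * (x - y)"
    using weak at_0 x y by (cases "x = 0") (auto simp: algebra_simps)
  show "xlogx x > xlogx y + (ln y + 1) * (x - y)" if "x \<noteq> y"
    using strict at_0 x y that by (cases "x = 0") (auto simp: algebra_simps)
qed

lemma xlogx_convex:
  assumes "x \<ge> 0" "y \<ge> 0" "0 \<le> s" "s \<le> 1"
  shows "xlogx (s * x + (1 - s) * y) \<le> s * xlogx x + (1 - s) * xlogx y"
proof -
  define z where "z = s * x + (1 - s) * y"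
  have z0: "z \<ge> 0" using assms by (simp add: z_def)
  show ?thesis
  proof (cases "z = 0")
    case True
    show ?thesis
    proof (cases "s = 0 \<or> s = 1")
      case False
      hence "x = 0 \<and> y = 0" using \<open>z = 0\<close> assms unfolding z_def
        by (smt (verit) mult_nonneg_nonneg mult_pos_pos)
      thus ?thesis by (simp add: xlogx_def)
    qed auto
  next
    case False
    hence zp: "z > 0" using z0 by auto
    have "s * xlogx x + (1 - s) * xlogx y
        \<ge> s * (xlogx z + (ln z + 1) * (x - z)) + (1 - s) * (xlogx z + (ln z + 1) * (y - z))"
      using xlogx_above_tangent(1)[OF zp] assms by (intro add_mono mult_left_mono) auto
    also have "s * (xlogx z + (ln z + 1) * (x - z)) + (1 - s) * (xlogx z + (ln z + 1) * (y - z))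
        = xlogx z"
      unfolding z_def by (simp add: algebra_simps)
    finally show ?thesis unfolding z_def .
  qed
qed

lemma xlogx_midpoint_strict:
  assumes "x \<ge> 0" "y \<ge> 0" "x \<noteq> y"
  shows "xlogx ((x + y) / 2) < (xlogx x + xlogx y) / 2"
proof -
  define z where "z = (x + y) / 2"
  have zp: "z > 0" using assms by (simp add: z_def)
  have "x \<noteq> z" "y \<noteq> z" using assms by (auto simp: z_def)
  hence "xlogx x > xlogx z + (ln z + 1) * (x - z)" "xlogx y > xlogx z + (ln z + 1) * (y - z)"
    using xlogx_above_tangent(2)[OF zp] assms by auto
  moreover have "(ln z + 1) * (x - z) + (ln z + 1) * (y - z) = 0"
    by (simp add: z_def algebra_simps)
  ultimately have "2 * xlogx z < xlogx x + xlogx y"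
    by linarith
  thus ?thesis by (simp add: z_def)
qed

lemma continuous_on_xlogx: "continuous_on {0..} xlogx"
proof -
  have "continuous (at x within {0..}) xlogx" if "x \<ge> 0" for x
  proof (cases "x = 0")
    case False
    hence "isCont xlogx x" unfolding xlogx_def using that by (intro continuous_intros) auto
    thus ?thesis using continuous_at_imp_continuous_at_within by blast
  next
    case True
    have "(xlogx \<longlongrightarrow> 0) (at_right 0)" unfolding xlogx_def by real_asymp
    thus ?thesis unfolding continuous_within True
      by (simp add: xlogx_def at_within_Ici_at_right)
  qed
  thus ?thesis by (auto intro: continuous_on_eq_continuous_within[THEN iffD2])
qed

lemma selfpow_eq_exp_xlogx: "t \<ge> 0 \<Longrightarrow> selfpow t = exp (xlogx t)"
  by (auto simp: selfpow_def xlogx_def powr_def)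

locale lattice_polytope =
  fixes r :: nat and v :: "nat \<Rightarrow> int ^ ('n::finite)" and a :: "nat \<Rightarrow> int"
  assumes sum_v_zero: "(\<Sum>i<r. v i) = 0"
    and compact_P: "compact (polyP r v a)"
    and facets_meet_P: "\<forall>i<r. \<exists>x\<in>polyP r v a. inner (vr (v i)) x + real_of_int (a i) = 0"
begin

abbreviation "P \<equiv> polyP r v a"
abbreviation "I \<equiv> I_a r v a"
abbreviation "L \<equiv> L_a r v a"
abbreviation "m \<equiv> m_a r v a"

definition slack :: "nat \<Rightarrow> real ^ 'n \<Rightarrow> real" where
  "slack i x = inner (vr (v i)) x + real_of_int (a i)"

definition total_slack :: real where
  "total_slack = real_of_int (\<Sum>i<r. a i)"

definition entropy :: "real ^ 'n \<Rightarrow> real" where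
  "entropy x = (\<Sum>i<r. xlogx (slack i x))"

lemma mem_P_iff: "x \<in> P \<longleftrightarrow> (\<forall>i<r. slack i x \<ge> 0)"
  by (simp add: polyP_def slack_def)

lemma slack_add: "slack i (x + y) = slack i x + inner (vr (v i)) y"
  by (simp add: slack_def inner_add_right)

lemma slack_diff: "slack i x - slack i y = inner (vr (v i)) (x - y)"
  by (simp add: slack_def inner_diff_right)

lemma slack_convex_comb: "slack i (s *\<^sub>R x + (1 - s) *\<^sub>R y) = s * slack i x + (1 - s) * slack i y"
  by (simp add: slack_def inner_add_right algebra_simps)

lemma sum_inner_v: "(\<Sum>i<r. inner (vr (v i)) u) = 0"
proof -
  have "(\<Sum>i<r. inner (vr (v i)) u) = inner (vr (\<Sum>i<r. v i)) u"
    by (simp add: vr_sum inner_sum_left)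
  thus ?thesis by (simp add: sum_v_zero)
qed

lemma sum_slack: "(\<Sum>i<r. slack i x) = total_slack"
  using sum_inner_v[of x] by (simp add: slack_def sum.distrib total_slack_def)

lemma bounded_P: "bounded P"
  using compact_P compact_imp_bounded by blast

lemma r_gt_0: "r > 0"
proof (rule ccontr)
  assume "\<not> r > 0"
  hence "P = UNIV" by (auto simp: polyP_def)
  thus False using bounded_P by simp
qed

lemma P_nonempty: "P \<noteq> {}"
  using facets_meet_P r_gt_0 by auto

lemma P_convex_comb: "x \<in> P \<Longrightarrow> y \<in> P \<Longrightarrow> 0 \<le> s \<Longrightarrow> s \<le> 1 \<Longrightarrow> s *\<^sub>R x + (1 - s) *\<^sub>R y \<in> P"
  unfolding mem_P_iff slack_convex_comb by (auto intro!: add_nonneg_nonneg mult_nonneg_nonneg)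

lemma total_slack_nonneg: "total_slack \<ge> 0"
proof -
  obtain x where "x \<in> P" using P_nonempty by auto
  hence "(\<Sum>i<r. slack i x) \<ge> 0" by (intro sum_nonneg) (auto simp: mem_P_iff)
  thus ?thesis by (simp add: sum_slack)
qed

lemma slack_notin_I: assumes "i < r" "i \<notin> I" "x \<in> P" shows "slack i x = 0"
proof -
  obtain c where c: "\<forall>x\<in>P. inner (vr (v i)) x = c"
    using assms unfolding I_a_def by auto
  obtain y where y: "y \<in> P" "inner (vr (v i)) y + real_of_int (a i) = 0"
    using facets_meet_P assms by auto
  have "inner (vr (v i)) x = inner (vr (v i)) y"
    using c y(1) assms(3) by simp
  thus ?thesis using y(2) by (simp add: slack_def)
qed

lemma I_subset: "I \<subseteq> {..<r}"
  by (auto simp: I_a_def)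

lemma finite_I: "finite I"
  using I_subset finite_subset by blast

lemma slack_pos_somewhere: assumes "i \<in> I" shows "\<exists>p\<in>P. slack i p > 0"
proof (rule ccontr)
  assume none: "\<not> ?thesis"
  have "i < r" using assms I_subset by auto
  have "inner (vr (v i)) p = - real_of_int (a i)" if "p \<in> P" for p
  proof -
    have "slack i p \<ge> 0" using that \<open>i < r\<close> by (simp add: mem_P_iff)
    hence "slack i p = 0" using none that by force
    thus ?thesis by (simp add: slack_def)
  qed
  thus False using assms unfolding I_a_def by auto
qed

lemma phi_a_eq_exp_entropy: "x \<in> P \<Longrightarrow> phi_a r v a x = exp (entropy x)"
  unfolding phi_a_def entropy_def
  by (simp add: exp_sum selfpow_eq_exp_xlogx mem_P_iff slack_def[symmetric])

lemma continuous_on_entropy: "continuous_on P entropy"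
proof -
  have "continuous_on P (\<lambda>x. xlogx (slack i x))" if "i < r" for i
  proof (rule continuous_on_compose2[OF continuous_on_xlogx])
    show "continuous_on P (slack i)" unfolding slack_def by (intro continuous_intros)
    show "slack i ` P \<subseteq> {0..}" using that by (auto simp: mem_P_iff)
  qed
  thus ?thesis unfolding entropy_def by (intro continuous_on_sum) auto
qed

lemma orthogonal_all_v_imp_zero:
  assumes "\<forall>i<r. inner (vr (v i)) u = 0" shows "u = 0"
proof (rule ccontr)
  assume u: "u \<noteq> 0"
  obtain x where x: "x \<in> P" using P_nonempty by auto
  obtain B where B: "\<forall>y\<in>P. norm y \<le> B" using bounded_P bounded_iff by blast
  define t where "t = (B + norm x + 1) / norm u"
  have "x + t *\<^sub>R u \<in> P"
    using assms x unfolding mem_P_iff by (simp add: slack_add inner_scaleR_right)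
  hence "norm (x + t *\<^sub>R u) \<le> B" "norm x \<le> B" using B x by auto
  moreover have "norm (t *\<^sub>R u) \<le> norm (x + t *\<^sub>R u) + norm x"
    using norm_triangle_ineq4[of "x + t *\<^sub>R u" x] by simp
  moreover have "B + norm x + 1 > 0"
    using calculation(2) norm_ge_zero[of x] by linarith
  hence "norm (t *\<^sub>R u) = B + norm x + 1"
    using u by (simp add: t_def)
  ultimately show False by linarith
qed

lemma entropy_minimizer_slack_pos:
  assumes m0: "m0 \<in> P" "\<forall>x\<in>P. entropy m0 \<le> entropy x" and j: "j \<in> I"
  shows "slack j m0 > 0"
proof (rule ccontr)
  assume "\<not> slack j m0 > 0"
  hence j0: "slack j m0 = 0" using m0 j I_subset mem_P_iff by force
  obtain p where p: "p \<in> P" "slack j p > 0" using slack_pos_somewhere[OF j] by auto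
  define C where "C = (\<Sum>i<r. xlogx (slack i p) - xlogx (slack i m0))"
  \<comment> \<open>\<open>xlogx\<close> has slope \<open>-\<infinity>\<close> at \<open>0\<close>: moving a small step \<open>s\<close> towards \<open>p\<close> gains
      \<open>s slack j p ln s\<close> in the \<open>j\<close>-th term, which beats the convexity bound \<open>s C\<close> on the others.\<close>
  define s where "s = exp (- (\<bar>C\<bar> + 1) / slack j p)"
  have s: "0 < s" "s \<le> 1" using p by (auto simp: s_def intro!: divide_nonpos_pos)
  have ln_s: "slack j p * ln s = - (\<bar>C\<bar> + 1)" using p by (simp add: s_def)
  define y where "y = s *\<^sub>R p + (1 - s) *\<^sub>R m0"
  have yP: "y \<in> P" unfolding y_def using P_convex_comb p m0 s by auto
  have "xlogx (slack i y) - xlogx (slack i m0)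
      \<le> s * (xlogx (slack i p) - xlogx (slack i m0)) + (if i = j then s * slack j p * ln s else 0)"
    if "i < r" for i
  proof (cases "i = j")
    case True
    have "slack j y = s * slack j p" using j0 by (simp add: y_def slack_convex_comb)
    hence "xlogx (slack j y) = s * xlogx (slack j p) + s * slack j p * ln s"
      using s p by (simp add: xlogx_def ln_mult algebra_simps)
    thus ?thesis using True j0 by (simp add: xlogx_def)
  next
    case False
    have "xlogx (slack i y) \<le> s * xlogx (slack i p) + (1 - s) * xlogx (slack i m0)"
      unfolding y_def slack_convex_comb using that p m0 s by (intro xlogx_convex) (auto simp: mem_P_iff)
    thus ?thesis using False by (simp add: algebra_simps)
  qed
  hence "entropy y - entropy m0
      \<le> (\<Sum>i<r. s * (xlogx (slack i p) - xlogx (slack i m0)) + (if i = j then s * slack j p * ln s else 0))"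
    unfolding entropy_def sum_subtractf[symmetric] by (intro sum_mono) auto
  also have "\<dots> = s * C + s * (slack j p * ln s)"
    using j I_subset by (auto simp: sum.distrib sum_distrib_left C_def)
  also have "\<dots> = s * (C - (\<bar>C\<bar> + 1))" unfolding ln_s by (simp add: algebra_simps)
  also have "\<dots> < 0" using s by (intro mult_pos_neg) auto
  finally show False using m0 yP by force
qed

lemma entropy_minimizer_unique:
  assumes m1: "m1 \<in> P" "\<forall>x\<in>P. entropy m1 \<le> entropy x"
    and m2: "m2 \<in> P" "\<forall>x\<in>P. entropy m2 \<le> entropy x"
  shows "m1 = m2"
proof (rule ccontr)
  assume "m1 \<noteq> m2"
  then obtain i where i: "i < r" "inner (vr (v i)) (m2 - m1) \<noteq> 0"
    using orthogonal_all_v_imp_zero[of "m2 - m1"] by auto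
  have differ: "slack i m1 \<noteq> slack i m2" using i slack_diff[of i m2 m1] by auto
  define y where "y = (1/2::real) *\<^sub>R m1 + (1 - 1/2) *\<^sub>R m2"
  have yP: "y \<in> P" unfolding y_def by (rule P_convex_comb) (use m1 m2 in auto)
  have "entropy y = (\<Sum>k<r. xlogx ((slack k m1 + slack k m2) / 2))"
    unfolding entropy_def y_def slack_convex_comb by (simp add: add_divide_distrib)
  also have "\<dots> < (\<Sum>k<r. (xlogx (slack k m1) + xlogx (slack k m2)) / 2)"
  proof (rule sum_strict_mono_ex1)
    show "\<forall>k\<in>{..<r}. xlogx ((slack k m1 + slack k m2) / 2) \<le> (xlogx (slack k m1) + xlogx (slack k m2)) / 2"
      using xlogx_convex[of _ _ "1/2"] m1 m2 by (auto simp: mem_P_iff add_divide_distrib)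
    show "\<exists>k\<in>{..<r}. xlogx ((slack k m1 + slack k m2) / 2) < (xlogx (slack k m1) + xlogx (slack k m2)) / 2"
      using i differ m1 m2 by (intro bexI[of _ i] xlogx_midpoint_strict) (auto simp: mem_P_iff)
  qed auto
  also have "\<dots> = (entropy m1 + entropy m2) / 2"
    unfolding entropy_def add_divide_distrib sum.distrib sum_divide_distrib by simp
  finally have "2 * entropy y < entropy m1 + entropy m2" by simp
  moreover have "entropy m1 \<le> entropy y" "entropy m2 \<le> entropy y" using m1 m2 yP by auto
  ultimately show False by simp
qed

lemma m_minimizes: "m \<in> P" "\<forall>x\<in>P. entropy m \<le> entropy x"
proof -
  have phi_entropy: "(m0 \<in> P \<and> (\<forall>x\<in>P. phi_a r v a m0 \<le> phi_a r v a x))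
      \<longleftrightarrow> (m0 \<in> P \<and> (\<forall>x\<in>P. entropy m0 \<le> entropy x))" for m0
    by (auto simp: phi_a_eq_exp_entropy)
  have "\<exists>m0\<in>P. \<forall>x\<in>P. entropy m0 \<le> entropy x"
    using continuous_attains_inf[OF compact_P P_nonempty continuous_on_entropy] by auto
  hence "\<exists>!m0. m0 \<in> P \<and> (\<forall>x\<in>P. phi_a r v a m0 \<le> phi_a r v a x)"
    using entropy_minimizer_unique unfolding phi_entropy by blast
  hence "m \<in> P \<and> (\<forall>x\<in>P. phi_a r v a m \<le> phi_a r v a x)"
    unfolding m_a_def by (rule theI')
  thus "m \<in> P" "\<forall>x\<in>P. entropy m \<le> entropy x" using phi_entropy by blast+
qed

lemma slack_m_pos: "i \<in> I \<Longrightarrow> slack i m > 0"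
  using entropy_minimizer_slack_pos m_minimizes by blast

definition Lker :: "(real ^ 'n) set" where
  "Lker = {u. \<forall>i<r. i \<notin> I \<longrightarrow> inner (vr (v i)) u = 0}"

lemma subspace_Lker: "subspace Lker"
  unfolding subspace_def Lker_def by (auto simp: inner_add_right inner_scaleR_right)

lemma ball_Lker_in_P: "\<exists>\<delta>>0. \<forall>u\<in>Lker. norm u \<le> \<delta> \<longrightarrow> m + u \<in> P"
proof -
  have "\<exists>\<delta>>0. \<forall>i\<in>I. \<delta> * (norm (vr (v i)) + 1) \<le> slack i m"
  proof (cases "I = {}")
    case False
    define \<delta> where "\<delta> = Min ((\<lambda>i. slack i m / (norm (vr (v i)) + 1)) ` I)"
    have "\<delta> > 0" unfolding \<delta>_def using False finite_I slack_m_pos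
      by (subst Min_gr_iff) (auto intro!: divide_pos_pos add_nonneg_pos)
    moreover have "\<delta> * (norm (vr (v i)) + 1) \<le> slack i m" if "i \<in> I" for i
    proof -
      have "\<delta> \<le> slack i m / (norm (vr (v i)) + 1)" unfolding \<delta>_def using that finite_I by auto
      thus ?thesis by (simp add: pos_le_divide_eq add_nonneg_pos)
    qed
    ultimately show ?thesis by blast
  qed (intro exI[of _ 1], auto)
  then obtain \<delta> where \<delta>: "\<delta> > 0" "\<forall>i\<in>I. \<delta> * (norm (vr (v i)) + 1) \<le> slack i m" by auto
  have "slack i (m + u) \<ge> 0" if u: "u \<in> Lker" "norm u \<le> \<delta>" and i: "i < r" for u i
  proof (cases "i \<in> I")
    case True
    have "\<bar>inner (vr (v i)) u\<bar> \<le> norm (vr (v i)) * norm u" by (rule Cauchy_Schwarz_ineq2)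
    also have "\<dots> \<le> norm (vr (v i)) * \<delta>" using u by (intro mult_left_mono) auto
    also have "\<dots> \<le> slack i m" using \<delta> True
      by (smt (verit) mult.commute mult_nonneg_nonneg norm_ge_zero distrib_left)
    finally show ?thesis by (simp add: slack_add)
  next
    case False
    thus ?thesis using u i slack_notin_I[OF i False m_minimizes(1)] by (simp add: slack_add Lker_def)
  qed
  thus ?thesis using \<delta> unfolding mem_P_iff by blast
qed

lemma subspace_L: "subspace L"
  unfolding L_a_def by (rule subspace_span)

lemma L_eq_Lker: "L = Lker"
proof
  show "L \<subseteq> Lker"
    unfolding L_a_def
  proof (rule span_minimal[OF _ subspace_Lker])
    have "inner (vr (v i)) (p - q) = 0" if "i < r" "i \<notin> I" "p \<in> P" "q \<in> P" for i p q
      using slack_notin_I[OF that(1,2)] that(3,4) slack_diff[of i p q] by simp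
    thus "{p - q |p q. p \<in> P \<and> q \<in> P} \<subseteq> Lker" by (auto simp: Lker_def)
  qed
  show "Lker \<subseteq> L"
  proof
    fix u assume u: "u \<in> Lker"
    obtain \<delta> where \<delta>: "\<delta> > 0" "\<forall>u\<in>Lker. norm u \<le> \<delta> \<longrightarrow> m + u \<in> P"
      using ball_Lker_in_P by auto
    show "u \<in> L"
    proof (cases "u = 0")
      case True thus ?thesis by (simp add: L_a_def span_zero)
    next
      case False
      define e where "e = \<delta> / norm u"
      have e: "e > 0" using \<delta> False by (simp add: e_def)
      have "m + e *\<^sub>R u \<in> P"
        using \<delta> e u False subspace_Lker by (simp add: e_def subspace_scale)
      hence "e *\<^sub>R u \<in> L"
        unfolding L_a_def using m_minimizes(1) by (intro span_base) force
      hence "(1/e) *\<^sub>R (e *\<^sub>R u) \<in> L" using subspace_L subspace_scale by blast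
      thus ?thesis using e by simp
    qed
  qed
qed

lemma inner_v_L_notin_I: "u \<in> L \<Longrightarrow> i < r \<Longrightarrow> i \<notin> I \<Longrightarrow> inner (vr (v i)) u = 0"
  by (auto simp: L_eq_Lker Lker_def)

lemma sum_inner_v_I_L: assumes "u \<in> L" shows "(\<Sum>i\<in>I. inner (vr (v i)) u) = 0"
proof -
  have "(\<Sum>i\<in>I. inner (vr (v i)) u) = (\<Sum>i<r. inner (vr (v i)) u)"
    by (rule sum.mono_neutral_left) (use I_subset inner_v_L_notin_I assms in auto)
  thus ?thesis using sum_inner_v by simp
qed

lemma diff_P_in_L: "x \<in> P \<Longrightarrow> y \<in> P \<Longrightarrow> x - y \<in> L"
  unfolding L_a_def by (rule span_base) auto

lemma ball_L_in_P: "\<exists>\<delta>>0. \<forall>u\<in>L. norm u \<le> \<delta> \<longrightarrow> m + u \<in> P"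
  using ball_Lker_in_P by (simp add: L_eq_Lker)

definition qform :: "real ^ 'n \<Rightarrow> real" where
  "qform u = (\<Sum>i\<in>I. (inner (vr (v i)) u)^2)"

lemma qform_scaleR: "qform (t *\<^sub>R u) = t^2 * qform u"
  by (simp add: qform_def inner_scaleR_right power_mult_distrib sum_distrib_left)

lemma qform_pos: assumes "u \<in> L" "u \<noteq> 0" shows "qform u > 0"
proof -
  have "qform u \<ge> 0" unfolding qform_def by (intro sum_nonneg) auto
  moreover have "qform u \<noteq> 0"
  proof
    assume "qform u = 0"
    hence "\<forall>i\<in>I. inner (vr (v i)) u = 0" using finite_I unfolding qform_def
      by (subst (asm) sum_nonneg_eq_0_iff) auto
    hence "\<forall>i<r. inner (vr (v i)) u = 0" using inner_v_L_notin_I assms(1) by blast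
    thus False using orthogonal_all_v_imp_zero assms(2) by blast
  qed
  ultimately show ?thesis by simp
qed

lemma qform_coercive: "\<exists>\<kappa>>0. \<forall>u\<in>L. qform u \<ge> \<kappa> * (norm u)^2"
proof -
  have unit: "(1 / norm u) *\<^sub>R u \<in> L \<inter> sphere 0 1" if "u \<in> L" "u \<noteq> 0" for u
    using that subspace_L by (auto simp: subspace_scale)
  have scale: "qform u = (norm u)^2 * qform ((1 / norm u) *\<^sub>R u)" if "u \<noteq> 0" for u
    using that by (simp add: qform_scaleR power_divide)
  show ?thesis
  proof (cases "L \<inter> sphere 0 1 = {}")
    case True
    have "qform u \<ge> 1 * (norm u)^2" if "u \<in> L" for u
      using unit[OF that] True by (cases "u = 0") (auto simp: qform_def)
    thus ?thesis by (intro exI[of _ 1]) auto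
  next
    case False
    have "compact (L \<inter> sphere 0 1)"
      using subspace_L closed_subspace by (intro closed_Int_compact) auto
    moreover have "continuous_on (L \<inter> sphere 0 1) qform"
      unfolding qform_def by (intro continuous_intros)
    ultimately obtain u0 where u0: "u0 \<in> L \<inter> sphere 0 1" "\<forall>u\<in>L \<inter> sphere 0 1. qform u0 \<le> qform u"
      using continuous_attains_inf[OF _ False] by blast
    have "qform u \<ge> qform u0 * (norm u)^2" if "u \<in> L" for u
    proof (cases "u = 0")
      case False
      hence "qform u0 \<le> qform ((1 / norm u) *\<^sub>R u)" using u0(2) unit[OF that] by blast
      hence "(norm u)^2 * qform u0 \<le> qform u" using scale[OF False] by (simp add: mult_left_mono)
      thus ?thesis by (simp add: mult.commute)
    qed (simp add: qform_def)
    moreover have "qform u0 > 0" using u0(1) by (intro qform_pos) auto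
    ultimately show ?thesis by blast
  qed
qed

lemma m_stationary:
  assumes u: "u \<in> L" shows "(\<Sum>i\<in>I. inner (vr (v i)) u * ln (slack i m)) = 0"
proof -
  define b where "b i = inner (vr (v i)) u" for i
  define G where "G s = (\<Sum>i\<in>I. xlogx (slack i m + s * b i))" for s
  have entropy_G: "entropy (m + s *\<^sub>R u) = G s" for s
  proof -
    have "entropy (m + s *\<^sub>R u) = (\<Sum>i<r. xlogx (slack i m + s * b i))"
      by (simp add: entropy_def slack_add b_def inner_scaleR_right)
    also have "\<dots> = G s" unfolding G_def
    proof (rule sum.mono_neutral_right)
      show "\<forall>i\<in>{..<r} - I. xlogx (slack i m + s * b i) = 0"
        using inner_v_L_notin_I[OF u] slack_notin_I m_minimizes(1) by (auto simp: b_def xlogx_def)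
    qed (use I_subset in auto)
    finally show ?thesis .
  qed
  obtain \<delta> where \<delta>: "\<delta> > 0" "\<forall>u\<in>L. norm u \<le> \<delta> \<longrightarrow> m + u \<in> P" using ball_L_in_P by auto
  define d where "d = \<delta> / (norm u + 1)"
  have d: "d > 0" using \<delta> by (simp add: d_def add_nonneg_pos)
  have "G 0 \<le> G s" if "\<bar>0 - s\<bar> < d" for s
  proof -
    have "\<bar>s\<bar> * (norm u + 1) < \<delta>"
      using that by (simp add: d_def pos_less_divide_eq add_nonneg_pos)
    moreover have "\<bar>s\<bar> * norm u \<le> \<bar>s\<bar> * (norm u + 1)" by (intro mult_left_mono) auto
    moreover have "s *\<^sub>R u \<in> L" using u subspace_L by (simp add: subspace_scale)
    ultimately have "m + s *\<^sub>R u \<in> P" using \<delta> by simp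
    hence "entropy m \<le> entropy (m + s *\<^sub>R u)" using m_minimizes by blast
    thus "G 0 \<le> G s" using entropy_G[of 0] entropy_G[of s] by simp
  qed
  moreover have "(G has_real_derivative (\<Sum>i\<in>I. b i * (ln (slack i m) + 1))) (at 0)"
    unfolding G_def xlogx_def
    apply (rule derivative_eq_intros refl | use slack_m_pos in force)+
    apply (rule sum.cong[OF refl])
    subgoal for i using slack_m_pos[of i] by (simp add: field_simps)
    done
  ultimately have "(\<Sum>i\<in>I. b i * (ln (slack i m) + 1)) = 0"
    using DERIV_local_min d by blast
  moreover have "(\<Sum>i\<in>I. b i) = 0" using sum_inner_v_I_L[OF u] by (simp add: b_def)
  ultimately show ?thesis by (simp add: b_def distrib_left sum.distrib)
qed

end

definition rat_vec :: "real ^ 'n::finite \<Rightarrow> bool" where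
  "rat_vec x \<longleftrightarrow> (\<forall>j. x $ j \<in> \<rat>)"

lemma rat_vec_inner: "rat_vec x \<Longrightarrow> rat_vec y \<Longrightarrow> inner x y \<in> \<rat>"
  unfolding rat_vec_def inner_vec_def by (intro Rats_sum) (simp add: Rats_mult)

lemma rat_vec_Gram_Schmidt_step:
  assumes "rat_vec x" "\<And>b. b \<in> S \<Longrightarrow> rat_vec b"
  shows "rat_vec (x - (\<Sum>b\<in>S. (b \<bullet> x / (b \<bullet> b)) *\<^sub>R b))"
  using assms by (auto simp: rat_vec_def rat_vec_inner intro!: Rats_diff Rats_sum Rats_mult Rats_divide)

lemma rat_vec_vr: "rat_vec (vr z)"
  unfolding rat_vec_def vr_def by simp

lemma rational_orthogonal_extension:
  fixes S :: "(real ^ 'n::finite) set"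
  assumes "finite T" "finite S" "pairwise orthogonal S" "\<forall>s\<in>S. rat_vec s" "\<forall>t\<in>T. rat_vec t"
  shows "\<exists>U. finite U \<and> (\<forall>u\<in>U. rat_vec u) \<and> pairwise orthogonal (S \<union> U) \<and> span (S \<union> U) = span (S \<union> T)"
using assms
proof (induction arbitrary: S)
  case empty then show ?case
    by (intro exI[of _ "{}"]) auto
next
  case (insert a T)
  define a' where "a' = a - (\<Sum>b\<in>S. (b \<bullet> a / (b \<bullet> b)) *\<^sub>R b)"
  have rat_a': "rat_vec a'" unfolding a'_def using insert.prems by (intro rat_vec_Gram_Schmidt_step) auto
  have "pairwise orthogonal (insert a' S)"
  proof (rule pairwise_orthogonal_insert[OF insert.prems(2)])
    fix y assume "y \<in> S"
    hence "orthogonal y a'" unfolding a'_def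
      by (intro Gram_Schmidt_step[OF insert.prems(2)] span_base)
    thus "orthogonal a' y" by (simp add: orthogonal_commute)
  qed
  then obtain U where U: "finite U" "\<forall>u\<in>U. rat_vec u" "pairwise orthogonal (insert a' S \<union> U)"
      "span (insert a' S \<union> U) = span (insert a' S \<union> T)"
    using insert.IH[of "insert a' S"] insert.prems rat_a' by auto
  have "span (S \<union> insert a' U) = span (insert a' (S \<union> T))"
    using U(4) by simp
  also have "\<dots> = span (insert a (S \<union> T))"
    by (simp add: a'_def span_neg span_sum span_base span_mul eq_span_insert_eq)
  finally show ?case
    using U rat_a' by (intro exI[of _ "insert a' U"]) auto
qed

lemma rational_orthogonal_projection:
  fixes S :: "(real ^ 'n::finite) set"
  assumes "finite S" "\<forall>s\<in>S. rat_vec s"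
  obtains proj where "linear proj" "\<And>x s. s \<in> S \<Longrightarrow> orthogonal s (proj x)"
    "\<And>u. \<forall>s\<in>S. orthogonal s u \<Longrightarrow> proj u = u" "\<And>x. rat_vec x \<Longrightarrow> rat_vec (proj x)"
proof -
  obtain B where B: "finite B" "\<forall>b\<in>B. rat_vec b" "pairwise orthogonal B" "span B = span S"
    using rational_orthogonal_extension[of S "{}"] assms by auto
  define proj where "proj x = x - (\<Sum>b\<in>B. (b \<bullet> x / (b \<bullet> b)) *\<^sub>R b)" for x :: "real ^ 'n"
  have "linear proj"
    unfolding proj_def
    by (intro linear_compose_sub linear_id linear_compose_sum ballI linear_compose_scale_right)
       (auto intro!: linearI simp: inner_add_right inner_scaleR_right add_divide_distrib scaleR_add_left)
  moreover have "orthogonal s (proj x)" if "s \<in> S" for s x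
  proof -
    have "s \<in> span B" using B(4) that by (auto intro: span_base)
    thus ?thesis using Gram_Schmidt_step[OF B(3), of s x] by (simp add: proj_def)
  qed
  moreover have "proj u = u" if "\<forall>s\<in>S. orthogonal s u" for u
  proof -
    have "orthogonal u b" if "b \<in> B" for b
      using orthogonal_to_span[of b S u] B(4) that \<open>\<forall>s\<in>S. orthogonal s u\<close>
      by (auto simp: orthogonal_commute intro: span_base)
    thus ?thesis by (simp add: proj_def orthogonal_def inner_commute)
  qed
  moreover have "rat_vec (proj x)" if "rat_vec x" for x
    unfolding proj_def using B(2) that by (intro rat_vec_Gram_Schmidt_step) auto
  ultimately show ?thesis using that by blast
qed

lemma common_denominator:
  assumes "finite J" "\<forall>j\<in>J. x j \<in> \<rat>"
  shows "\<exists>q::nat. q > 0 \<and> (\<forall>j\<in>J. real q * x j \<in> \<int>)"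
using assms
proof (induction)
  case empty thus ?case by (intro exI[of _ 1]) auto
next
  case (insert j J)
  obtain q where q: "q > 0" "\<forall>i\<in>J. real q * x i \<in> \<int>" using insert by auto
  obtain p b where pb: "x j = of_int p / of_int b" "b > 0"
    using Rats_cases'[of "x j"] insert.prems by blast
  have "real (q * nat b) * x i \<in> \<int>" if "i \<in> J" for i
  proof -
    have "real (q * nat b) * x i = of_int b * (real q * x i)" using pb by simp
    thus ?thesis using q that by (metis Ints_mult Ints_of_int)
  qed
  moreover have "real (q * nat b) * x j = real q * of_int p" using pb by simp
  ultimately show ?case using q pb by (intro exI[of _ "q * nat b"]) auto
qed

lemma rat_vec_integral_multiple:
  assumes "rat_vec p"
  obtains q :: nat and z where "q > 0" "vr z = real q *\<^sub>R p"
proof -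
  obtain q :: nat where q: "q > 0" "\<forall>j\<in>UNIV. real q * p $ j \<in> \<int>"
    using common_denominator[of UNIV "\<lambda>j. p $ j"] assms by (auto simp: rat_vec_def)
  have "real_of_int \<lfloor>real q * p $ j\<rfloor> = real q * p $ j" for j
    using q(2) by (auto elim: Ints_cases)
  hence "vr (\<chi> j. \<lfloor>real q * p $ j\<rfloor>) = real q *\<^sub>R p"
    by (simp add: vr_def vec_eq_iff)
  thus ?thesis using q that by blast
qed

lemma norm_diff_floor_combination_le:
  fixes z :: "'b \<Rightarrow> int ^ 'n::finite"
  assumes "finite E" "u = (\<Sum>e\<in>E. c e *\<^sub>R vr (z e))"
  shows "norm (u - vr (\<Sum>e\<in>E. \<lfloor>c e\<rfloor> *s z e)) \<le> (\<Sum>e\<in>E. norm (vr (z e)))"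
proof -
  have "vr (\<Sum>e\<in>E. \<lfloor>c e\<rfloor> *s z e) = (\<Sum>e\<in>E. real_of_int \<lfloor>c e\<rfloor> *\<^sub>R vr (z e))"
    unfolding vr_sum by (simp add: vr_def vec_eq_iff)
  hence "u - vr (\<Sum>e\<in>E. \<lfloor>c e\<rfloor> *s z e) = (\<Sum>e\<in>E. (c e - \<lfloor>c e\<rfloor>) *\<^sub>R vr (z e))"
    using assms(2) by (simp add: sum_subtractf scaleR_diff_left)
  also have "norm \<dots> \<le> (\<Sum>e\<in>E. norm ((c e - \<lfloor>c e\<rfloor>) *\<^sub>R vr (z e)))"
    by (rule norm_sum)
  also have "\<dots> \<le> (\<Sum>e\<in>E. norm (vr (z e)))"
  proof (rule sum_mono)
    fix e
    have "\<bar>c e - \<lfloor>c e\<rfloor>\<bar> \<le> 1" by linarith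
    thus "norm ((c e - \<lfloor>c e\<rfloor>) *\<^sub>R vr (z e)) \<le> norm (vr (z e))"
      by (simp add: mult_left_le_one_le)
  qed
  finally show ?thesis .
qed

lemma int_points_dense_in_rational_complement:
  fixes S :: "(real ^ 'n::finite) set"
  assumes "finite S" "\<forall>s\<in>S. rat_vec s"
  shows "\<exists>R\<ge>0. \<forall>u. (\<forall>s\<in>S. orthogonal s u) \<longrightarrow>
           (\<exists>l. (\<forall>s\<in>S. orthogonal s (vr l)) \<and> norm (u - vr l) \<le> R)"
proof -
  obtain proj where proj: "linear proj" "\<And>x s. s \<in> S \<Longrightarrow> orthogonal s (proj x)"
    "\<And>u. \<forall>s\<in>S. orthogonal s u \<Longrightarrow> proj u = u" "\<And>x. rat_vec x \<Longrightarrow> rat_vec (proj x)"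
    using rational_orthogonal_projection[OF assms] by blast
  \<comment> \<open>integral multiples of the projected standard basis span the complement\<close>
  have "\<exists>q z. q > 0 \<and> vr z = real q *\<^sub>R proj e" if "e \<in> Basis" for e :: "real ^ 'n"
  proof -
    have "rat_vec e" using that unfolding Basis_vec_def rat_vec_def by (auto simp: axis_def)
    thus ?thesis using rat_vec_integral_multiple[OF proj(4)] by metis
  qed
  then obtain q :: "real ^ 'n \<Rightarrow> nat" and z where qz:
    "\<And>e. e \<in> Basis \<Longrightarrow> q e > 0 \<and> vr (z e) = real (q e) *\<^sub>R proj e"
    by metis
  have orth: "\<forall>s\<in>S. orthogonal s (vr (\<Sum>e\<in>Basis. \<lfloor>c e\<rfloor> *s z e))" for c
  proof
    fix s assume s: "s \<in> S"
    have "vr (\<Sum>e\<in>Basis. \<lfloor>c e\<rfloor> *s z e) = (\<Sum>e\<in>Basis. real_of_int \<lfloor>c e\<rfloor> *\<^sub>R vr (z e))"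
      unfolding vr_sum by (simp add: vr_def vec_eq_iff)
    also have "orthogonal s \<dots>"
      using qz proj(2)[OF s] by (intro orthogonal_rvsum) (simp_all add: orthogonal_clauses)
    finally show "orthogonal s (vr (\<Sum>e\<in>Basis. \<lfloor>c e\<rfloor> *s z e))" .
  qed
  have repr: "u = (\<Sum>e\<in>Basis. ((u \<bullet> e) / real (q e)) *\<^sub>R vr (z e))" if "\<forall>s\<in>S. orthogonal s u" for u
  proof -
    have "u = proj (\<Sum>e\<in>Basis. (u \<bullet> e) *\<^sub>R e)"
      using proj(3)[OF that] by (simp add: euclidean_representation)
    thus ?thesis using qz by (simp add: linear_sum[OF proj(1)] linear_scale[OF proj(1)])
  qed
  have "\<exists>l. (\<forall>s\<in>S. orthogonal s (vr l)) \<and> norm (u - vr l) \<le> (\<Sum>e\<in>Basis. norm (vr (z e)))"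
    if "\<forall>s\<in>S. orthogonal s u" for u
    using orth[of "\<lambda>e. (u \<bullet> e) / real (q e)"] norm_diff_floor_combination_le[OF finite_Basis repr[OF that]]
    by (intro exI[of _ "\<Sum>e\<in>Basis. \<lfloor>(u \<bullet> e) / real (q e)\<rfloor> *s z e"]) simp
  thus ?thesis by (intro exI[of _ "\<Sum>e\<in>Basis. norm (vr (z e))"]) (auto intro: sum_nonneg)
qed

context lattice_polytope begin

lemma L_int_points_dense: "\<exists>R\<ge>0. \<forall>u\<in>L. \<exists>l::int^'n. vr l \<in> L \<and> norm (u - vr l) \<le> R"
proof -
  define S where "S = (\<lambda>i. vr (v i)) ` {i. i < r \<and> i \<notin> I}"
  have L_orth: "u \<in> L \<longleftrightarrow> (\<forall>s\<in>S. orthogonal s u)" for u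
    by (auto simp: L_eq_Lker Lker_def S_def orthogonal_def)
  show ?thesis
    using int_points_dense_in_rational_complement[of S] unfolding L_orth[symmetric]
    by (auto simp: S_def rat_vec_vr)
qed

end

lemma ln_fact_Suc: "ln (fact (Suc n) :: real) = ln (real (Suc n)) + ln (fact n)"
proof -
  have "(fact (Suc n) :: real) = real (Suc n) * fact n" by (simp add: fact_Suc)
  moreover have "(fact n :: real) > 0" by simp
  ultimately show ?thesis by (simp add: ln_mult del: of_nat_Suc)
qed

lemma ln_fact_diff_expansion_sharp:
  assumes lam: "lam > 0" and M: "M \<le> lam / 2" and T0T: "T0 \<le> T"
    and rng: "\<And>j. T0 < j \<Longrightarrow> j \<le> T \<Longrightarrow> \<bar>real j - lam\<bar> \<le> M"
  shows "\<bar>ln (fact T) - ln (fact T0) - (real T - real T0) * ln lam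
          - ((real T - lam)^2 - (real T0 - lam)^2) / (2 * lam) - (real T - real T0) / (2 * lam)\<bar>
         \<le> (real T - real T0) * (2 * M^2 / lam^2)"
  using T0T rng
proof (induction T rule: dec_induct)
  case base thus ?case by simp
next
  case (step T)
  define D where "D T = ln (fact T) - ln (fact T0) - (real T - real T0) * ln lam
          - ((real T - lam)^2 - (real T0 - lam)^2) / (2 * lam) - (real T - real T0) / (2 * lam)" for T
  define y where "y = (real T + 1 - lam) / lam"
  \<comment> \<open>each step \<open>T \<mapsto> T + 1\<close> adds \<open>ln (1 + y) - y = O(y\<^sup>2)\<close> to the error\<close>
  have IH: "\<bar>D T\<bar> \<le> (real T - real T0) * (2 * M^2 / lam^2)"
    using step.IH step.prems unfolding D_def by simp
  have "\<bar>real T + 1 - lam\<bar> \<le> M" using step.prems[of "Suc T"] step.hyps by simp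
  hence yb: "\<bar>y\<bar> \<le> M / lam" using lam unfolding y_def abs_divide
    by (simp add: divide_right_mono)
  have Mlam: "M / lam \<le> 1/2" using M lam by (simp add: divide_le_eq)
  have "1 + y = real (Suc T) / lam" using lam by (simp add: y_def field_simps)
  hence lnS: "ln (real (Suc T)) - ln lam = ln (1 + y)" using lam by (simp add: ln_div del: of_nat_Suc)
  have "D (Suc T) = D T + (ln (real (Suc T)) - ln lam - y)"
    unfolding D_def y_def ln_fact_Suc using lam
    by (simp add: field_simps power2_eq_square) 
  also have "\<dots> = D T + (ln (1 + y) - y)" using lnS by simp
  finally have DS: "D (Suc T) = D T + (ln (1 + y) - y)" .
  have "\<bar>y\<bar> \<le> 1/2" using yb Mlam by linarith
  hence "\<bar>ln (1 + y) - y\<bar> \<le> 2 * y^2" by (intro abs_ln_one_plus_x_minus_x_bound)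
  also have "\<dots> \<le> 2 * (M / lam)^2" using power_mono[of "\<bar>y\<bar>" "M/lam" 2] yb by simp
  finally have "\<bar>ln (1 + y) - y\<bar> \<le> 2 * M^2 / lam^2" by (simp add: power_divide)
  hence "\<bar>D (Suc T)\<bar> \<le> (real T - real T0) * (2 * M^2 / lam^2) + 2 * M^2 / lam^2"
    using IH DS by linarith
  moreover have "(real (Suc T) - real T0) * (2 * M^2 / lam^2) = (real T - real T0) * (2 * M^2 / lam^2) + 2 * M^2 / lam^2"
    by (simp add: algebra_simps add_divide_distrib diff_divide_distrib)
  ultimately have "\<bar>D (Suc T)\<bar> \<le> (real (Suc T) - real T0) * (2 * M^2 / lam^2)" by linarith
  thus ?case by (simp only: D_def)
qed

lemma ln_fact_diff_expansion_ordered: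
  assumes lam: "lam > 0" and M: "M \<le> lam / 2" and T0T: "T0 \<le> T"
    and b1: "\<bar>real T - lam\<bar> \<le> M" and b2: "\<bar>real T0 - lam\<bar> \<le> M"
  shows "\<bar>ln (fact T) - ln (fact T0) - (real T - real T0) * ln lam
          - ((real T - lam)^2 - (real T0 - lam)^2) / (2 * lam)\<bar> \<le> M / lam + 4 * M^3 / lam^2"
proof -
  have rng: "\<bar>real j - lam\<bar> \<le> M" if "T0 < j" "j \<le> T" for j
  proof -
    have "real T0 \<le> real j" "real j \<le> real T" using that by auto
    thus ?thesis using b1 b2 by linarith
  qed
  have core: "\<bar>ln (fact T) - ln (fact T0) - (real T - real T0) * ln lam
          - ((real T - lam)^2 - (real T0 - lam)^2) / (2 * lam) - (real T - real T0) / (2 * lam)\<bar>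
         \<le> (real T - real T0) * (2 * M^2 / lam^2)"
    by (rule ln_fact_diff_expansion_sharp[OF lam M T0T rng])
  have d: "0 \<le> real T - real T0" "real T - real T0 \<le> 2 * M" using T0T b1 b2 by linarith+
  have "(real T - real T0) / (2 * lam) \<le> 2 * M / (2 * lam)" using d lam by (intro divide_right_mono) auto
  also have "\<dots> = M / lam" by simp
  finally have e1: "\<bar>(real T - real T0) / (2 * lam)\<bar> \<le> M / lam" using d lam by simp
  have "(real T - real T0) * (2 * M^2 / lam^2) \<le> (2 * M) * (2 * M^2 / lam^2)"
    using d by (intro mult_right_mono) auto
  also have "\<dots> = 4 * M^3 / lam^2" by (simp add: power2_eq_square power3_eq_cube)
  finally have e2: "(real T - real T0) * (2 * M^2 / lam^2) \<le> 4 * M^3 / lam^2" .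
  show ?thesis using core e1 e2 by linarith
qed

lemma ln_fact_diff_expansion:
  assumes lam: "lam > 0" and M: "M \<le> lam / 2"
    and b1: "\<bar>real T - lam\<bar> \<le> M" and b2: "\<bar>real T0 - lam\<bar> \<le> M"
  shows "\<bar>ln (fact T) - ln (fact T0) - (real T - real T0) * ln lam
          - ((real T - lam)^2 - (real T0 - lam)^2) / (2 * lam)\<bar> \<le> M / lam + 4 * M^3 / lam^2"
proof (cases "T0 \<le> T")
  case True thus ?thesis using ln_fact_diff_expansion_ordered[OF lam M True b1 b2] by simp
next
  case False
  hence "T \<le> T0" by simp
  have X: "\<bar>ln (fact T0) - ln (fact T) - (real T0 - real T) * ln lam
          - ((real T0 - lam)^2 - (real T - lam)^2) / (2 * lam)\<bar> \<le> M / lam + 4 * M^3 / lam^2"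
    by (rule ln_fact_diff_expansion_ordered[OF lam M \<open>T \<le> T0\<close> b2 b1])
  have "ln (fact T0) - ln (fact T) - (real T0 - real T) * ln lam
          - ((real T0 - lam)^2 - (real T - lam)^2) / (2 * lam) = 
        - (ln (fact T) - ln (fact T0) - (real T - real T0) * ln lam
          - ((real T - lam)^2 - (real T0 - lam)^2) / (2 * lam))"
    by (simp add: diff_divide_distrib algebra_simps)
  with X show ?thesis by (simp only: abs_minus_cancel)
qed

lemma ln_ge_one_minus_inv: "(x::real) > 0 \<Longrightarrow> ln x \<ge> 1 - 1 / x"
  using ln_le_minus_one[of "1/x"] by (simp add: ln_div)

lemma ln_fact_increase_lower:
  assumes T0: "T0 \<ge> 1" and N: "T0 + s \<le> N"
  shows "ln (fact (T0 + s)) - ln (fact T0) \<ge> real s * ln (real T0) + real s * (real s + 1) / (2 * real N)"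
  using N
proof (induction s)
  case 0 thus ?case by simp
next
  case (Suc s)
  have IH: "ln (fact (T0 + s)) - ln (fact T0) \<ge> real s * ln (real T0) + real s * (real s + 1) / (2 * real N)"
    using Suc by simp
  have pos: "real T0 > 0" "real (T0 + Suc s) > 0" "real N > 0" using T0 Suc.prems by auto
  have "ln (real (T0 + Suc s) / real T0) \<ge> 1 - real T0 / real (T0 + Suc s)"
    using ln_ge_one_minus_inv[of "real (T0 + Suc s) / real T0"] pos by simp
  also have "1 - real T0 / real (T0 + Suc s) = real (Suc s) / real (T0 + Suc s)"
    using pos by (simp add: field_simps)
  also have "real (Suc s) / real (T0 + Suc s) \<ge> real (Suc s) / real N"
    using pos Suc.prems by (intro divide_left_mono) auto
  finally have st: "ln (real (T0 + Suc s)) \<ge> ln (real T0) + real (Suc s) / real N"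
    using pos by (simp add: ln_div)
  have "ln (fact (T0 + Suc s)) = ln (real (T0 + Suc s)) + ln (fact (T0 + s))"
    using ln_fact_Suc[of "T0 + s"] by simp
  moreover have "real s * (real s + 1) / (2 * real N) + real (Suc s) / real N
      = real (Suc s) * (real (Suc s) + 1) / (2 * real N)" using pos by (simp add: field_simps)
  moreover have "real (Suc s) * ln (real T0) = real s * ln (real T0) + ln (real T0)" by (simp add: algebra_simps)
  ultimately show ?case using IH st by linarith
qed

lemma ln_fact_decrease_upper:
  assumes T0: "T0 \<ge> 1" and s: "s \<le> T0"
  shows "ln (fact T0) - ln (fact (T0 - s)) \<le> real s * ln (real T0) - real s * (real s - 1) / (2 * real T0)"
  using s
proof (induction s)
  case 0 thus ?case by simp
next
  case (Suc s)
  have IH: "ln (fact T0) - ln (fact (T0 - s)) \<le> real s * ln (real T0) - real s * (real s - 1) / (2 * real T0)"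
    using Suc by simp
  have pos: "real T0 > 0" "real (T0 - s) > 0" using T0 Suc.prems by auto
  have eq: "T0 - s = Suc (T0 - Suc s)" using Suc.prems by simp
  have "ln (fact (T0 - s)) = ln (real (T0 - s)) + ln (fact (T0 - Suc s))"
    unfolding eq ln_fact_Suc by simp
  moreover have "ln (real (T0 - s) / real T0) \<le> real (T0 - s) / real T0 - 1"
    using pos by (intro ln_le_minus_one) auto
  hence "ln (real (T0 - s)) \<le> ln (real T0) - real s / real T0"
    using pos Suc.prems by (simp add: ln_div of_nat_diff field_simps)
  moreover have "real s * (real s - 1) / (2 * real T0) + real s / real T0
      = real (Suc s) * (real (Suc s) - 1) / (2 * real T0)" using pos by (simp add: field_simps)
  moreover have "real (Suc s) * ln (real T0) = real s * ln (real T0) + ln (real T0)" by (simp add: algebra_simps)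
  ultimately show ?case using IH by linarith
qed

lemma ln_fact_diff_lower:
  assumes T0: "T0 \<ge> 1" "T0 \<le> N" and T: "T \<le> N"
  shows "ln (fact T) - ln (fact T0) \<ge> (real T - real T0) * ln (real T0)
           + ((real T - real T0)^2 - \<bar>real T - real T0\<bar>) / (2 * real N)"
proof (cases "T0 \<le> T")
  case True
  define s where "s = T - T0"
  have Ts: "T = T0 + s" using True by (simp add: s_def)
  have Np: "real N > 0" using T0 by auto
  have "ln (fact T) - ln (fact T0) \<ge> real s * ln (real T0) + real s * (real s + 1) / (2 * real N)"
    unfolding Ts by (rule ln_fact_increase_lower) (use T0 T Ts in auto)
  moreover have "real s * (real s + 1) / (2 * real N) \<ge> ((real s)^2 - real s) / (2 * real N)"
    using Np by (intro divide_right_mono) (auto simp: power2_eq_square algebra_simps)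
  moreover have "real T - real T0 = real s" using Ts by simp
  ultimately show ?thesis by simp
next
  case False
  define s where "s = T0 - T"
  have Ts: "T = T0 - s" "s \<le> T0" using False by (auto simp: s_def)
  have Np: "real N > 0" "real T0 > 0" using T0 by auto
  have "ln (fact T0) - ln (fact T) \<le> real s * ln (real T0) - real s * (real s - 1) / (2 * real T0)"
    unfolding Ts by (rule ln_fact_decrease_upper) (use T0 Ts in auto)
  moreover have "real s * (real s - 1) / (2 * real T0) \<ge> real s * (real s - 1) / (2 * real N)"
  proof (rule divide_left_mono)
    show "0 \<le> real s * (real s - 1)" using False by (auto simp: s_def)
  qed (use Np T0 in auto)
  moreover have C: "real T - real T0 = - real s" using Ts by (simp add: of_nat_diff)
  moreover have D: "((- real s)^2 - \<bar>- real s\<bar>) = real s * (real s - 1)" by (simp add: power2_eq_square algebra_simps)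
  moreover have "(- real s) * ln (real T0) = - (real s * ln (real T0))" by simp
  ultimately show ?thesis unfolding C D by linarith
qed

lemma abs_ln_diff_le: assumes "(x::real) > 0" "y > 0" shows "\<bar>ln x - ln y\<bar> \<le> \<bar>x - y\<bar> / min x y"
proof (cases "x \<ge> y")
  case True
  have "ln x - ln y \<le> x / y - 1" using assms ln_le_minus_one[of "x / y"] by (simp add: ln_div)
  thus ?thesis using True assms by (simp add: min_def field_simps)
next
  case False
  have "ln y - ln x \<le> y / x - 1" using assms ln_le_minus_one[of "y / x"] by (simp add: ln_div)
  thus ?thesis using False assms by (simp add: min_def field_simps)
qed


definition int_box :: "nat \<Rightarrow> (int ^ 'n::finite) set" where
  "int_box M = {z. \<forall>j. \<bar>z $ j\<bar> \<le> int M}"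

lemma int_box_eq_image: "int_box M = (\<lambda>f. \<chi> j. f j) ` (\<Pi>\<^sub>E j\<in>UNIV. {- int M..int M})"
proof
  show "int_box M \<subseteq> (\<lambda>f. \<chi> j. f j) ` (\<Pi>\<^sub>E j\<in>UNIV. {- int M..int M})"
  proof
    fix z assume "z \<in> int_box M"
    hence "(\<lambda>j. z $ j) \<in> (\<Pi>\<^sub>E j\<in>UNIV. {- int M..int M})"
      by (auto simp: int_box_def abs_le_iff minus_le_iff)
    moreover have "z = (\<chi> j. (\<lambda>j. z $ j) j)" by simp
    ultimately show "z \<in> (\<lambda>f. \<chi> j. f j) ` (\<Pi>\<^sub>E j\<in>UNIV. {- int M..int M})" by blast
  qed
  show "(\<lambda>f. \<chi> j. f j) ` (\<Pi>\<^sub>E j\<in>UNIV. {- int M..int M}) \<subseteq> int_box M"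
    by (auto simp: int_box_def abs_le_iff PiE_def Pi_iff minus_le_iff)
qed

lemma finite_int_box: "finite (int_box M :: (int ^ 'n::finite) set)"
  unfolding int_box_eq_image by (intro finite_imageI finite_PiE) auto

lemma card_int_box_le: "card (int_box M :: (int ^ 'n::finite) set) \<le> (2 * M + 1) ^ CARD('n)"
proof -
  have "card (int_box M :: (int ^ 'n) set) \<le> card (\<Pi>\<^sub>E j\<in>(UNIV::'n set). {- int M..int M})"
    unfolding int_box_eq_image by (intro card_image_le finite_PiE) auto
  also have "nat (2 * int M + 1) = Suc (2 * M)" by (simp add: nat_eq_iff)
  hence "card (\<Pi>\<^sub>E j\<in>(UNIV::'n set). {- int M..int M}) = (2 * M + 1) ^ CARD('n)"
    by (simp add: card_PiE)
  finally show ?thesis .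
qed

lemma eventually_powr_less: assumes "e < 0" "\<delta> > 0" shows "eventually (\<lambda>k. real k powr e < \<delta>) sequentially"
  using tendsto_neg_powr[OF assms(1) filterlim_real_sequentially] assms(2) by (rule order_tendstoD(2))

lemma eventually_powr_ge: assumes "e > 0" shows "eventually (\<lambda>k. real k powr e \<ge> B) sequentially"
  using filterlim_compose[OF real_powr_at_top[OF assms] filterlim_real_sequentially]
  by (simp add: filterlim_at_top)

lemma eventually_real_ge: "eventually (\<lambda>k. real k \<ge> B) sequentially"
  using filterlim_real_sequentially by (simp add: filterlim_at_top)

lemma sqrt_mult_powr: "sqrt (real k) * real k powr c = real k powr (c + 1/2)"
  by (simp add: powr_half_sqrt[symmetric] powr_add[symmetric] add.commute)

lemma sqrt_mult_powr': "k > 0 \<Longrightarrow> sqrt (real k) * real k powr c = real k * real k powr (c - 1/2)"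
  by (simp add: sqrt_mult_powr powr_mult_base add.commute)

context lattice_polytope begin

abbreviation lat :: "nat \<Rightarrow> (int ^ 'n) set" where
  "lat k \<equiv> latt_kP r v a k"

text \<open>\<open>dev k z\<close> is the point \<open>(z - k m\<^sub>a) / \<surd>k\<close> at which \<open>\<nu>'\<^sub>k\<close> puts the mass of \<open>z\<close>, and
  \<open>part k i z\<close> is the \<open>i\<close>-th part \<open>\<langle>v\<^sub>i,z\<rangle> + k a\<^sub>i\<close> of the multinomial coefficient; \<open>core c k\<close>
  indexes the support of \<open>\<rho>\<^sub>k\<close>.\<close>

definition dev :: "nat \<Rightarrow> int ^ 'n \<Rightarrow> real ^ 'n" where
  "dev k z = (1 / sqrt (real k)) *\<^sub>R (vr z - real k *\<^sub>R m)"

definition part :: "nat \<Rightarrow> nat \<Rightarrow> int ^ 'n \<Rightarrow> int" where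
  "part k i z = iinner (v i) z + int k * a i"

definition core :: "real \<Rightarrow> nat \<Rightarrow> (int ^ 'n) set" where
  "core c k = {z. dev k z \<in> L \<and> norm (dev k z) < real k powr c}"

lemma of_int_part: "real_of_int (part k i z) = real k * slack i m + inner (vr (v i)) (vr z - real k *\<^sub>R m)"
  by (simp add: part_def of_int_iinner slack_def inner_diff_right algebra_simps)

lemma of_int_part_dev:
  "k > 0 \<Longrightarrow> real_of_int (part k i z) = real k * slack i m + sqrt (real k) * inner (vr (v i)) (dev k z)"
  by (simp add: of_int_part dev_def inner_scaleR_right)

lemma of_int_part_scaled: "k > 0 \<Longrightarrow> real_of_int (part k i z) = real k * slack i ((1 / real k) *\<^sub>R vr z)"
  by (simp add: part_def of_int_iinner slack_def algebra_simps)

lemma mem_lat_iff: assumes "k > 0" shows "z \<in> lat k \<longleftrightarrow> (1 / real k) *\<^sub>R vr z \<in> P"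
proof
  assume "z \<in> lat k"
  then obtain y where "y \<in> P" "vr z = real k *\<^sub>R y" by (auto simp: latt_kP_def)
  thus "(1 / real k) *\<^sub>R vr z \<in> P" using assms by simp
next
  assume "(1 / real k) *\<^sub>R vr z \<in> P"
  moreover have "vr z = real k *\<^sub>R ((1 / real k) *\<^sub>R vr z)" using assms by simp
  ultimately show "z \<in> lat k" unfolding latt_kP_def by blast
qed

lemma mem_lat_iff_part_nonneg: assumes "k > 0" shows "z \<in> lat k \<longleftrightarrow> (\<forall>i<r. part k i z \<ge> 0)"
proof -
  have "(\<forall>i<r. part k i z \<ge> 0) \<longleftrightarrow> (\<forall>i<r. real_of_int (part k i z) \<ge> 0)" by simp
  also have "\<dots> \<longleftrightarrow> (\<forall>i<r. slack i ((1 / real k) *\<^sub>R vr z) \<ge> 0)"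
    using assms by (simp add: of_int_part_scaled zero_le_mult_iff)
  finally show ?thesis using mem_lat_iff[OF assms] mem_P_iff by simp
qed

lemma lat_diff_center_in_L: assumes "k > 0" "z \<in> lat k" shows "vr z - real k *\<^sub>R m \<in> L"
proof -
  have "(1 / real k) *\<^sub>R vr z - m \<in> L"
    using assms diff_P_in_L m_minimizes(1) by (simp add: mem_lat_iff)
  hence "real k *\<^sub>R ((1 / real k) *\<^sub>R vr z - m) \<in> L" using subspace_L by (simp add: subspace_scale)
  thus ?thesis using assms by (simp add: scaleR_diff_right)
qed

lemma part_notin_I: assumes "k > 0" "z \<in> lat k" "i < r" "i \<notin> I" shows "part k i z = 0"
proof -
  have "slack i ((1 / real k) *\<^sub>R vr z) = 0"
    using assms slack_notin_I[OF assms(3,4)] by (simp add: mem_lat_iff)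
  hence "real_of_int (part k i z) = 0" using of_int_part_scaled[OF assms(1)] by simp
  thus ?thesis by simp
qed

lemma dev_in_L: "k > 0 \<Longrightarrow> z \<in> lat k \<Longrightarrow> dev k z \<in> L"
  unfolding dev_def using lat_diff_center_in_L subspace_L by (simp add: subspace_scale)

lemma inj_on_dev: "k > 0 \<Longrightarrow> inj_on (dev k) S"
  by (auto simp: inj_on_def dev_def vr_eq_iff)

lemma vr_diff_center_eq_dev: "k > 0 \<Longrightarrow> vr z - real k *\<^sub>R m = sqrt (real k) *\<^sub>R dev k z"
  by (simp add: dev_def)

lemma P_norm_bound: "\<exists>B\<ge>0. \<forall>y\<in>P. norm y \<le> B"
proof -
  obtain B where B: "\<forall>y\<in>P. norm y \<le> B" using bounded_P unfolding bounded_iff by auto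
  moreover obtain y where "y \<in> P" using P_nonempty by auto
  ultimately have "B \<ge> 0" using norm_ge_zero order_trans by blast
  thus ?thesis using B by blast
qed

lemma lat_subset_int_box: assumes B: "\<forall>y\<in>P. norm y \<le> B" and k: "k > 0"
  shows "lat k \<subseteq> int_box (nat \<lceil>real k * B\<rceil>)"
proof
  fix z assume "z \<in> lat k"
  hence "norm ((1 / real k) *\<^sub>R vr z) \<le> B" using mem_lat_iff[OF k] B by blast
  hence "norm (vr z) \<le> real k * B" using k by (simp add: field_simps)
  have "\<bar>z $ j\<bar> \<le> int (nat \<lceil>real k * B\<rceil>)" for j
  proof -
    have "\<bar>real_of_int (z $ j)\<bar> \<le> real k * B"
      using component_le_norm_cart[of "vr z" j] \<open>norm (vr z) \<le> real k * B\<close> by (simp add: vr_nth)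
    hence "\<bar>z $ j\<bar> \<le> \<lceil>real k * B\<rceil>" by linarith
    thus ?thesis by linarith
  qed
  thus "z \<in> int_box (nat \<lceil>real k * B\<rceil>)" by (simp add: int_box_def)
qed

lemma finite_lat: "finite (lat k)"
proof (cases "k = 0")
  case True
  hence "lat k \<subseteq> {0}" by (auto simp: latt_kP_def vr_eq_iff[of _ 0, simplified])
  thus ?thesis using finite_subset by blast
next
  case False
  obtain B where "\<forall>y\<in>P. norm y \<le> B" using P_norm_bound by auto
  thus ?thesis using lat_subset_int_box False finite_int_box finite_subset by (metis gr0I)
qed

lemma mem_lat_near_center:
  assumes k: "k > 0" and \<delta>: "\<forall>u\<in>L. norm u \<le> \<delta> \<longrightarrow> m + u \<in> P"
    and z: "vr z - real k *\<^sub>R m \<in> L" "norm (vr z - real k *\<^sub>R m) \<le> real k * \<delta>"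
  shows "z \<in> lat k"
proof -
  define u where "u = (1 / real k) *\<^sub>R (vr z - real k *\<^sub>R m)"
  have "u \<in> L" using z subspace_L by (simp add: u_def subspace_scale)
  moreover have "norm u \<le> \<delta>" using z k by (simp add: u_def divide_le_eq mult.commute)
  ultimately have "m + u \<in> P" using \<delta> by blast
  moreover have "m + u = (1 / real k) *\<^sub>R vr z" using k by (simp add: u_def scaleR_diff_right)
  ultimately show ?thesis using mem_lat_iff[OF k] by simp
qed

lemma rho_supp_eq_dev_core: "k > 0 \<Longrightarrow> rho_supp r v a c k = dev k ` core c k"
  unfolding rho_supp_def core_def dev_def by auto

lemma core_subset_lat: assumes "c < 1/2" shows "eventually (\<lambda>k. core c k \<subseteq> lat k) sequentially"
proof -
  obtain \<delta> where \<delta>: "\<delta> > 0" "\<forall>u\<in>L. norm u \<le> \<delta> \<longrightarrow> m + u \<in> P" using ball_L_in_P by auto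
  have "eventually (\<lambda>k. real k powr (c - 1/2) < \<delta>) sequentially"
    using assms \<delta> by (intro eventually_powr_less) auto
  thus ?thesis using eventually_gt_at_top[of 0]
  proof eventually_elim
    case (elim k)
    show ?case
    proof
      fix z assume z: "z \<in> core c k"
      have w: "vr z - real k *\<^sub>R m = sqrt (real k) *\<^sub>R dev k z"
        using vr_diff_center_eq_dev elim by simp
      have in_L: "vr z - real k *\<^sub>R m \<in> L"
        unfolding w using z subspace_L by (simp add: subspace_scale core_def)
      have "norm (vr z - real k *\<^sub>R m) = sqrt (real k) * norm (dev k z)" unfolding w by simp
      also have "\<dots> \<le> sqrt (real k) * real k powr c" using z by (intro mult_left_mono) (auto simp: core_def)
      also have "\<dots> = real k * real k powr (c - 1/2)" using elim by (simp add: sqrt_mult_powr')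
      also have "\<dots> \<le> real k * \<delta>" using elim by (intro mult_left_mono) auto
      finally show "z \<in> lat k" using mem_lat_near_center[OF elim(2) \<delta>(2) in_L] by blast
    qed
  qed
qed

definition total :: "nat \<Rightarrow> nat" where
  "total k = nat (int k * (\<Sum>i<r. a i))"

lemma of_nat_total: "real (total k) = real k * total_slack"
proof -
  have "real_of_int (\<Sum>i<r. a i) \<ge> 0" using total_slack_nonneg unfolding total_slack_def .
  hence "(\<Sum>i<r. a i) \<ge> 0" by (simp only: of_int_0_le_iff)
  thus ?thesis by (simp add: total_def total_slack_def)
qed

lemma sum_part: "(\<Sum>i<r. part k i z) = int k * (\<Sum>i<r. a i)"
proof -
  have "real_of_int (\<Sum>i<r. part k i z)
      = real k * (\<Sum>i<r. slack i m) + (\<Sum>i<r. inner (vr (v i)) (vr z - real k *\<^sub>R m))"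
    by (simp add: of_int_part sum.distrib sum_distrib_left)
  also have "\<dots> = real_of_int (int k * (\<Sum>i<r. a i))"
    by (simp add: sum_slack sum_inner_v total_slack_def)
  finally show ?thesis by (simp only: of_int_eq_iff)
qed

lemma part_le_total: assumes "k > 0" "z \<in> lat k" "i < r" shows "nat (part k i z) \<le> total k"
proof -
  have "part k i z \<le> (\<Sum>i<r. part k i z)"
    using assms mem_lat_iff_part_nonneg by (intro member_le_sum) auto
  thus ?thesis by (simp add: sum_part total_def nat_mono)
qed

lemma wt_eq: assumes "k > 0" "z \<in> lat k"
  shows "wt r v a k z = fact (total k) / (\<Prod>i\<in>I. fact (nat (part k i z)))"
proof -
  have "(\<Prod>i<r. fact (nat (part k i z)) :: real) = (\<Prod>i\<in>I. fact (nat (part k i z)))"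
    by (rule prod.mono_neutral_right) (use I_subset part_notin_I[OF assms] in auto)
  thus ?thesis unfolding wt_def multinom_def total_def part_def by simp
qed

lemma wt_pos: "k > 0 \<Longrightarrow> z \<in> lat k \<Longrightarrow> wt r v a k z > 0"
  by (simp add: wt_eq prod_pos)

lemma ln_wt_diff:
  assumes "k > 0" "z \<in> lat k" "z0 \<in> lat k"
  shows "ln (wt r v a k z) - ln (wt r v a k z0)
    = - (\<Sum>i\<in>I. ln (fact (nat (part k i z))) - ln (fact (nat (part k i z0))))"
  using assms finite_I by (simp add: wt_eq ln_div ln_prod prod_pos sum_subtractf)

lemma ln_gauss_wt: "ln (gauss_wt r v a x) = - (1/2) * (\<Sum>i\<in>I. (inner (vr (v i)) x)^2 / slack i m)"
  by (simp add: gauss_wt_def slack_def)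

lemma part_diff: "real_of_int (part k i z) - real_of_int (part k i z0) = inner (vr (v i)) (vr z - vr z0)"
  by (simp add: of_int_part inner_diff_right)

lemma vr_diff_in_L: assumes "k > 0" "z \<in> lat k" "z0 \<in> lat k" shows "vr z - vr z0 \<in> L"
proof -
  have "(vr z - real k *\<^sub>R m) - (vr z0 - real k *\<^sub>R m) \<in> L"
    using lat_diff_center_in_L[OF assms(1)] assms(2,3) subspace_diff[OF subspace_L] by blast
  thus ?thesis by simp
qed

text \<open>The first-order term of the expansion of \<open>ln T!\<close> around \<open>\<lambda>\<^sub>i = k slack\<^sub>i(m)\<close> cancels,
  by the stationarity of \<open>m\<close> and \<open>\<Sum>\<^sub>i v\<^sub>i = 0\<close>.\<close>

lemma linear_term_vanishes:
  assumes "k > 0" "z \<in> lat k" "z0 \<in> lat k"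
  shows "(\<Sum>i\<in>I. inner (vr (v i)) (vr z - vr z0) * ln (real k * slack i m)) = 0"
proof -
  define w where "w = vr z - vr z0"
  have "w \<in> L" using vr_diff_in_L[OF assms] by (simp add: w_def)
  have "(\<Sum>i\<in>I. inner (vr (v i)) w * ln (real k * slack i m))
      = (\<Sum>i\<in>I. inner (vr (v i)) w * ln (real k) + inner (vr (v i)) w * ln (slack i m))"
  proof (rule sum.cong)
    fix i assume "i \<in> I"
    thus "inner (vr (v i)) w * ln (real k * slack i m)
        = inner (vr (v i)) w * ln (real k) + inner (vr (v i)) w * ln (slack i m)"
      using assms(1) slack_m_pos[of i] by (simp add: ln_mult distrib_left)
  qed simp
  also have "\<dots> = (\<Sum>i\<in>I. inner (vr (v i)) w) * ln (real k) + (\<Sum>i\<in>I. inner (vr (v i)) w * ln (slack i m))"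
    by (simp add: sum.distrib sum_distrib_right)
  also have "\<dots> = 0" using sum_inner_v_I_L[OF \<open>w \<in> L\<close>] m_stationary[OF \<open>w \<in> L\<close>] by simp
  finally show ?thesis by (simp add: w_def)
qed

definition quad_rem :: "nat \<Rightarrow> nat \<Rightarrow> int ^ 'n \<Rightarrow> int ^ 'n \<Rightarrow> real" where
  "quad_rem k i z z0 = ln (fact (nat (part k i z))) - ln (fact (nat (part k i z0)))
     - (real_of_int (part k i z) - real_of_int (part k i z0)) * ln (real k * slack i m)
     - ((real_of_int (part k i z) - real k * slack i m)^2
        - (real_of_int (part k i z0) - real k * slack i m)^2) / (2 * (real k * slack i m))"

lemma ln_wt_gauss_diff_eq:
  assumes k: "k > 0" and z: "z \<in> lat k" and z0: "z0 \<in> lat k"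
  shows "ln (wt r v a k z) - ln (wt r v a k z0) - (ln (gauss_wt r v a (dev k z)) - ln (gauss_wt r v a (dev k z0)))
    = - (\<Sum>i\<in>I. quad_rem k i z z0)"
proof -
  have sq: "(real_of_int (part k i y) - real k * slack i m)^2 / (2 * (real k * slack i m))
      = (1/2) * ((inner (vr (v i)) (dev k y))^2 / slack i m)" if "i \<in> I" for i y
    using of_int_part_dev[OF k, of i y] k slack_m_pos[OF that] by (simp add: power_mult_distrib)
  have "(\<Sum>i\<in>I. quad_rem k i z z0)
      = (\<Sum>i\<in>I. ln (fact (nat (part k i z))) - ln (fact (nat (part k i z0))))
        - (\<Sum>i\<in>I. inner (vr (v i)) (vr z - vr z0) * ln (real k * slack i m))
        - ((1/2) * (\<Sum>i\<in>I. (inner (vr (v i)) (dev k z))^2 / slack i m)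
           - (1/2) * (\<Sum>i\<in>I. (inner (vr (v i)) (dev k z0))^2 / slack i m))"
    unfolding quad_rem_def part_diff diff_divide_distrib
    by (simp add: sq sum_subtractf sum_distrib_left cong: sum.cong)
  thus ?thesis
    using ln_wt_diff[OF k z z0] linear_term_vanishes[OF k z z0] by (simp add: ln_gauss_wt)
qed

lemma abs_quad_rem_le:
  assumes k: "k > 0" and i: "i \<in> I" and z: "z \<in> lat k" and z0: "z0 \<in> lat k"
    and nx: "norm (dev k z) \<le> real k powr c" and nx0: "norm (dev k z0) \<le> real k powr c"
    and small: "norm (vr (v i)) * real k powr (c - 1/2) \<le> slack i m / 2"
  shows "\<bar>quad_rem k i z z0\<bar> \<le> (norm (vr (v i)) / slack i m) * real k powr (c - 1/2)
            + (4 * norm (vr (v i))^3 / (slack i m)^2) * real k powr (3 * c - 1/2)"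
proof -
  define \<nu> where "\<nu> = norm (vr (v i))"
  define \<tau> where "\<tau> = slack i m"
  define lam where "lam = real k * \<tau>"
  define e where "e = real k powr (c - 1/2)"
  define M where "M = \<nu> * (real k * e)"
  have \<tau>: "\<tau> > 0" using slack_m_pos i by (simp add: \<tau>_def)
  have lam: "lam > 0" using \<tau> k by (simp add: lam_def)
  have "i < r" using i I_subset by auto
  hence of_nat_part: "real (nat (part k i y)) = real_of_int (part k i y)" if "y \<in> lat k" for y
    using mem_lat_iff_part_nonneg[OF k] that by auto
  have near: "\<bar>real_of_int (part k i y) - lam\<bar> \<le> M" if "norm (dev k y) \<le> real k powr c" for y
  proof -
    have "\<bar>real_of_int (part k i y) - lam\<bar> = sqrt (real k) * \<bar>inner (vr (v i)) (dev k y)\<bar>"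
      using of_int_part_dev[OF k, of i y] by (simp add: lam_def \<tau>_def abs_mult)
    also have "\<dots> \<le> sqrt (real k) * (\<nu> * norm (dev k y))"
      using Cauchy_Schwarz_ineq2 by (intro mult_left_mono) (auto simp: \<nu>_def)
    also have "\<dots> \<le> sqrt (real k) * (\<nu> * real k powr c)"
      using that by (intro mult_left_mono) (auto simp: \<nu>_def)
    also have "\<dots> = M" using sqrt_mult_powr'[OF k, of c] by (simp add: M_def e_def)
    finally show ?thesis .
  qed
  have "M = real k * (\<nu> * e)" by (simp add: M_def)
  also have "\<dots> \<le> real k * (\<tau> / 2)" using small by (intro mult_left_mono) (auto simp: \<nu>_def e_def \<tau>_def)
  finally have "M \<le> lam / 2" by (simp add: lam_def)
  hence "\<bar>quad_rem k i z z0\<bar> \<le> M / lam + 4 * M^3 / lam^2"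
    using ln_fact_diff_expansion[of lam M "nat (part k i z)" "nat (part k i z0)"] lam near nx nx0
    by (simp add: quad_rem_def of_nat_part z z0 lam_def \<tau>_def)
  moreover have "M / lam = (\<nu> / \<tau>) * e" using k \<tau> by (simp add: M_def lam_def)
  moreover have "4 * M^3 / lam^2 = (4 * \<nu>^3 / \<tau>^2) * (real k * e^3)"
    using k \<tau> by (simp add: M_def lam_def power_mult_distrib power2_eq_square power3_eq_cube)
  moreover have "e^3 = real k powr (of_nat 3 * (c - 1/2))"
    using k by (simp add: e_def powr_power)
  hence "real k * e^3 = real k powr (1 + 3 * (c - 1/2))"
    using k by (simp add: powr_mult_base)
  hence "real k * e^3 = real k powr (3 * c - 1/2)"
    by (simp add: algebra_simps)
  ultimately show ?thesis by (simp add: \<nu>_def \<tau>_def e_def)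
qed

definition gauss_err :: "real \<Rightarrow> nat \<Rightarrow> real" where
  "gauss_err c k = (\<Sum>i\<in>I. norm (vr (v i)) / slack i m) * real k powr (c - 1/2)
     + (\<Sum>i\<in>I. 4 * norm (vr (v i))^3 / (slack i m)^2) * real k powr (3 * c - 1/2)"

lemma gauss_err_nonneg: "gauss_err c k \<ge> 0"
  unfolding gauss_err_def using slack_m_pos
  by (intro add_nonneg_nonneg mult_nonneg_nonneg sum_nonneg) (auto simp: zero_le_divide_iff less_imp_le)

lemma gauss_err_tendsto_0: assumes "c < 1/6" shows "gauss_err c \<longlonglongrightarrow> 0"
proof -
  have "(\<lambda>k. real k powr (c - 1/2)) \<longlonglongrightarrow> 0" "(\<lambda>k. real k powr (3 * c - 1/2)) \<longlonglongrightarrow> 0"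
    using assms by (auto intro!: tendsto_neg_powr filterlim_real_sequentially)
  hence "gauss_err c \<longlonglongrightarrow> (\<Sum>i\<in>I. norm (vr (v i)) / slack i m) * 0
           + (\<Sum>i\<in>I. 4 * norm (vr (v i))^3 / (slack i m)^2) * 0"
    unfolding gauss_err_def[abs_def] by (intro tendsto_intros)
  thus ?thesis by simp
qed

lemma eventually_slack_dominates:
  assumes "c < 1/2"
  shows "eventually (\<lambda>k. \<forall>i\<in>I. norm (vr (v i)) * real k powr (c - 1/2) \<le> slack i m / 2) sequentially"
proof (rule eventually_ball_finite[OF finite_I], intro ballI)
  fix i assume i: "i \<in> I"
  have pos: "norm (vr (v i)) + 1 > 0" by (simp add: add_nonneg_pos)
  have "eventually (\<lambda>k. real k powr (c - 1/2) < slack i m / 2 / (norm (vr (v i)) + 1)) sequentially"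
    using assms slack_m_pos[OF i] pos by (intro eventually_powr_less) auto
  thus "eventually (\<lambda>k. norm (vr (v i)) * real k powr (c - 1/2) \<le> slack i m / 2) sequentially"
  proof eventually_elim
    case (elim k)
    have "norm (vr (v i)) * real k powr (c - 1/2) \<le> (norm (vr (v i)) + 1) * real k powr (c - 1/2)"
      by (intro mult_right_mono) auto
    also have "\<dots> \<le> slack i m / 2"
    proof -
      have "real k powr (c - 1/2) * (norm (vr (v i)) + 1) < slack i m / 2"
        using elim pos_less_divide_eq[OF pos] by blast
      thus ?thesis by (simp add: mult.commute)
    qed
    finally show ?case .
  qed
qed

lemma ln_wt_gauss_close:
  assumes c: "0 < c" "c < 1/6"
  shows "eventually (\<lambda>k. \<forall>z\<in>core c k. \<forall>z0\<in>core c k.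
     \<bar>ln (wt r v a k z) - ln (wt r v a k z0) - (ln (gauss_wt r v a (dev k z)) - ln (gauss_wt r v a (dev k z0)))\<bar>
       \<le> gauss_err c k) sequentially"
proof -
  have c2: "c < 1/2" using c by simp
  from eventually_gt_at_top[of 0] core_subset_lat[OF c2] eventually_slack_dominates[OF c2]
  show ?thesis
  proof eventually_elim
  case (elim k)
  show ?case
  proof (intro ballI)
    fix z z0 assume z: "z \<in> core c k" and z0: "z0 \<in> core c k"
    have lat: "z \<in> lat k" "z0 \<in> lat k" using z z0 elim by auto
    have "\<bar>\<Sum>i\<in>I. quad_rem k i z z0\<bar> \<le> (\<Sum>i\<in>I. \<bar>quad_rem k i z z0\<bar>)" by (rule sum_abs)
    also have "\<dots> \<le> (\<Sum>i\<in>I. (norm (vr (v i)) / slack i m) * real k powr (c - 1/2)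
            + (4 * norm (vr (v i))^3 / (slack i m)^2) * real k powr (3 * c - 1/2))"
      using elim z z0 lat by (intro sum_mono abs_quad_rem_le) (auto simp: core_def)
    also have "\<dots> = gauss_err c k"
      by (simp add: gauss_err_def sum.distrib sum_distrib_right)
    finally show "\<bar>ln (wt r v a k z) - ln (wt r v a k z0)
        - (ln (gauss_wt r v a (dev k z)) - ln (gauss_wt r v a (dev k z0)))\<bar> \<le> gauss_err c k"
      using ln_wt_gauss_diff_eq[OF _ lat] elim by simp
  qed
  qed
qed

lemma ln_fact_part_diff_lower:
  assumes k: "k > 0" and i: "i \<in> I" and z: "z \<in> lat k" and z0: "z0 \<in> lat k"
    and R: "norm (vr z0 - real k *\<^sub>R m) \<le> R"
    and big: "real k * slack i m \<ge> 2 * (norm (vr (v i)) * R + 1)"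
  shows "ln (fact (nat (part k i z))) - ln (fact (nat (part k i z0)))
    \<ge> inner (vr (v i)) (vr z - vr z0) * ln (real k * slack i m)
       - \<bar>inner (vr (v i)) (vr z - vr z0)\<bar> * (2 * norm (vr (v i)) * R / (real k * slack i m))
       + ((inner (vr (v i)) (vr z - vr z0))^2 - \<bar>inner (vr (v i)) (vr z - vr z0)\<bar>) / (2 * (real k * total_slack))"
proof -
  define \<nu> where "\<nu> = norm (vr (v i))"
  define lam where "lam = real k * slack i m"
  define s where "s = inner (vr (v i)) (vr z - vr z0)"
  define T where "T = nat (part k i z)"
  define T0 where "T0 = nat (part k i z0)"
  have "i < r" using i I_subset by auto
  have lam: "lam > 0" using k slack_m_pos[OF i] by (simp add: lam_def)
  have of_nat_T: "real T = real_of_int (part k i z)" "real T0 = real_of_int (part k i z0)"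
    using mem_lat_iff_part_nonneg[OF k] z z0 \<open>i < r\<close> by (auto simp: T_def T0_def)
  have "\<bar>inner (vr (v i)) (vr z0 - real k *\<^sub>R m)\<bar> \<le> \<nu> * R"
    using Cauchy_Schwarz_ineq2[of "vr (v i)" "vr z0 - real k *\<^sub>R m"] R
    by (simp add: \<nu>_def) (meson mult_left_mono norm_ge_zero order_trans)
  hence T0_near: "\<bar>real T0 - lam\<bar> \<le> \<nu> * R"
    by (simp add: of_nat_T of_int_part lam_def)
  hence T0_big: "real T0 \<ge> lam / 2 + 1" using big by (simp add: lam_def \<nu>_def)
  have "ln (fact T) - ln (fact T0) \<ge> s * ln (real T0) + (s^2 - \<bar>s\<bar>) / (2 * real (total k))"
    using ln_fact_diff_lower[of T0 "total k" T] T0_big lam part_le_total[OF k _ \<open>i < r\<close>] z z0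
    by (simp add: T_def T0_def s_def of_nat_T[unfolded T_def T0_def] part_diff)
  moreover have "\<bar>ln (real T0) - ln lam\<bar> \<le> 2 * \<nu> * R / lam"
  proof -
    have "\<bar>ln (real T0) - ln lam\<bar> \<le> \<bar>real T0 - lam\<bar> / min (real T0) lam"
      using T0_big lam by (intro abs_ln_diff_le) auto
    also have "\<dots> \<le> (\<nu> * R) / (lam / 2)"
      using T0_near T0_big lam by (intro frac_le) auto
    finally show ?thesis by (simp add: mult_ac)
  qed
  hence "\<bar>s * (ln (real T0) - ln lam)\<bar> \<le> \<bar>s\<bar> * (2 * \<nu> * R / lam)"
    unfolding abs_mult by (intro mult_left_mono) auto
  hence "s * (ln (real T0) - ln lam) \<ge> - (\<bar>s\<bar> * (2 * \<nu> * R / lam))"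
    by linarith
  ultimately show ?thesis
    by (simp add: T_def T0_def s_def lam_def \<nu>_def of_nat_total algebra_simps)
qed

definition tail_const :: "real \<Rightarrow> real" where
  "tail_const R = (\<Sum>i\<in>I. 2 * norm (vr (v i))^2 * R / slack i m)
                  + (\<Sum>i\<in>I. norm (vr (v i))) / (2 * total_slack)"

lemma total_slack_pos: assumes "I \<noteq> {}" shows "total_slack > 0"
proof -
  obtain i where i: "i \<in> I" using assms by auto
  have "slack i m \<le> (\<Sum>i<r. slack i m)"
    using i I_subset m_minimizes(1) by (intro member_le_sum) (auto simp: mem_P_iff)
  thus ?thesis using slack_m_pos[OF i] sum_slack[of m] by simp
qed

text \<open>Outside the core the quadratic term \<open>\<kappa> |z - z\<^sub>0|\<^sup>2 / (2 N)\<close> of the lower bound for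
  \<open>ln T!\<close> dominates; the linear term vanishes as in the core.\<close>

lemma ln_wt_ratio_upper:
  assumes k: "k > 0" and z: "z \<in> lat k" and z0: "z0 \<in> lat k" and "I \<noteq> {}"
    and R: "R \<ge> 0" "norm (vr z0 - real k *\<^sub>R m) \<le> R"
    and big: "\<forall>i\<in>I. real k * slack i m \<ge> 2 * (norm (vr (v i)) * R + 1)"
    and \<kappa>: "\<forall>u\<in>L. qform u \<ge> \<kappa> * (norm u)^2"
  shows "ln (wt r v a k z) - ln (wt r v a k z0)
    \<le> norm (vr z - vr z0) / real k * tail_const R - \<kappa> * norm (vr z - vr z0)^2 / (2 * (real k * total_slack))"
proof -
  define \<nu> where "\<nu> i = norm (vr (v i))" for i
  define s where "s i = inner (vr (v i)) (vr z - vr z0)" for i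
  define nw where "nw = norm (vr z - vr z0)"
  define kA where "kA = 2 * (real k * total_slack)"
  have kA: "kA > 0" using k total_slack_pos[OF \<open>I \<noteq> {}\<close>] by (simp add: kA_def)
  have abs_s: "\<bar>s i\<bar> \<le> \<nu> i * nw" for i
    unfolding s_def \<nu>_def nw_def by (rule Cauchy_Schwarz_ineq2)
  have "(\<Sum>i\<in>I. s i * ln (real k * slack i m) - \<bar>s i\<bar> * (2 * \<nu> i * R / (real k * slack i m))
             + ((s i)^2 - \<bar>s i\<bar>) / kA)
      \<le> (\<Sum>i\<in>I. ln (fact (nat (part k i z))) - ln (fact (nat (part k i z0))))"
    using ln_fact_part_diff_lower[OF k _ z z0 R(2)] big
    by (intro sum_mono) (auto simp: s_def \<nu>_def kA_def)
  moreover have "(\<Sum>i\<in>I. s i * ln (real k * slack i m) - \<bar>s i\<bar> * (2 * \<nu> i * R / (real k * slack i m))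
             + ((s i)^2 - \<bar>s i\<bar>) / kA)
      = (\<Sum>i\<in>I. s i * ln (real k * slack i m))
        - (\<Sum>i\<in>I. \<bar>s i\<bar> * (2 * \<nu> i * R / (real k * slack i m)))
        + ((\<Sum>i\<in>I. (s i)^2) - (\<Sum>i\<in>I. \<bar>s i\<bar>)) / kA"
    by (simp add: sum.distrib sum_subtractf sum_divide_distrib diff_divide_distrib)
  moreover have "(\<Sum>i\<in>I. s i * ln (real k * slack i m)) = 0"
    using linear_term_vanishes[OF k z z0] by (simp add: s_def)
  moreover have "(\<Sum>i\<in>I. \<bar>s i\<bar> * (2 * \<nu> i * R / (real k * slack i m)))
      \<le> (\<Sum>i\<in>I. (\<nu> i * nw) * (2 * \<nu> i * R / (real k * slack i m)))"
    using R slack_m_pos k by (intro sum_mono mult_right_mono abs_s) (auto simp: \<nu>_def intro!: divide_nonneg_pos)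
  moreover have "((\<Sum>i\<in>I. (s i)^2) - (\<Sum>i\<in>I. \<bar>s i\<bar>)) / kA \<ge> (\<kappa> * nw^2 - (\<Sum>i\<in>I. \<nu> i) * nw) / kA"
  proof -
    have "(\<Sum>i\<in>I. (s i)^2) \<ge> \<kappa> * nw^2"
      using \<kappa> vr_diff_in_L[OF k z z0] by (simp add: qform_def s_def nw_def)
    moreover have "(\<Sum>i\<in>I. \<bar>s i\<bar>) \<le> (\<Sum>i\<in>I. \<nu> i) * nw"
      unfolding sum_distrib_right by (intro sum_mono abs_s)
    ultimately show ?thesis using kA by (intro divide_right_mono) auto
  qed
  ultimately have "(\<Sum>i\<in>I. ln (fact (nat (part k i z))) - ln (fact (nat (part k i z0))))
      \<ge> - (\<Sum>i\<in>I. (\<nu> i * nw) * (2 * \<nu> i * R / (real k * slack i m))) + (\<kappa> * nw^2 - (\<Sum>i\<in>I. \<nu> i) * nw) / kA"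
    by linarith
  moreover have "(\<Sum>i\<in>I. (\<nu> i * nw) * (2 * \<nu> i * R / (real k * slack i m))) + (\<Sum>i\<in>I. \<nu> i) * nw / kA
      = nw / real k * tail_const R"
    using k total_slack_pos[OF \<open>I \<noteq> {}\<close>]
    by (simp add: tail_const_def kA_def \<nu>_def sum_distrib_left distrib_left power2_eq_square
        sum_divide_distrib field_simps)
  ultimately show ?thesis
    using ln_wt_diff[OF k z z0] by (simp add: nw_def kA_def diff_divide_distrib)
qed

lemma L_eq_zero_if_I_empty: assumes "I = {}" "u \<in> L" shows "u = 0"
proof -
  obtain \<kappa> where "\<kappa> > 0" "\<forall>u\<in>L. qform u \<ge> \<kappa> * (norm u)^2" using qform_coercive by auto
  thus ?thesis using assms by (auto simp: qform_def mult_le_0_iff)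
qed

lemma ln_wt_far_from_center:
  assumes k: "k > 0" and I: "I \<noteq> {}" and R: "R \<ge> 0"
    and \<kappa>: "\<kappa> > 0" "\<forall>u\<in>L. qform u \<ge> \<kappa> * (norm u)^2"
    and big: "\<forall>i\<in>I. real k * slack i m \<ge> 2 * (norm (vr (v i)) * R + 1)"
    and sk: "real k powr (c + 1/2) \<ge> max (2 * R) (8 * tail_const R * total_slack / \<kappa>)"
    and z0: "z0 \<in> lat k" "norm (vr z0 - real k *\<^sub>R m) \<le> R"
    and z: "z \<in> lat k" "norm (dev k z) \<ge> real k powr c"
  shows "ln (wt r v a k z) - ln (wt r v a k z0) \<le> - (\<kappa> / (16 * total_slack)) * real k powr (2 * c)"
proof -
  define A where "A = total_slack"
  have A: "A > 0" using total_slack_pos[OF I] by (simp add: A_def)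
  define sk where "sk = real k powr (c + 1/2)"
  define nw where "nw = norm (vr z - vr z0)"
  have "norm (vr z - real k *\<^sub>R m) = sqrt (real k) * norm (dev k z)"
    using vr_diff_center_eq_dev[OF k, of z] by simp
  also have "\<dots> \<ge> sk" unfolding sk_def sqrt_mult_powr[symmetric] using z(2) by (intro mult_left_mono) auto
  finally have "nw \<ge> sk - R"
    using norm_triangle_ineq2[of "vr z - real k *\<^sub>R m" "vr z0 - real k *\<^sub>R m"] z0(2)
    by (simp add: nw_def)
  hence nw: "nw \<ge> sk / 2" using sk by (simp add: sk_def)
  have "8 * tail_const R * A \<le> \<kappa> * sk" using sk \<kappa>(1) by (simp add: sk_def A_def pos_divide_le_eq mult.commute)
  also have "\<dots> \<le> \<kappa> * (2 * nw)" using nw \<kappa>(1) by (intro mult_left_mono) auto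
  finally have "tail_const R \<le> \<kappa> * nw / (4 * A)" using A by (simp add: pos_le_divide_eq mult_ac)
  hence "nw / real k * tail_const R \<le> nw / real k * (\<kappa> * nw / (4 * A))"
    by (intro mult_left_mono) (auto simp: nw_def)
  also have "\<dots> = \<kappa> * nw^2 / (4 * (real k * A))"
    by (simp add: power2_eq_square mult_ac)
  finally have "ln (wt r v a k z) - ln (wt r v a k z0) \<le> - (\<kappa> * nw^2 / (4 * (real k * A)))"
    using ln_wt_ratio_upper[OF k z(1) z0(1) I R z0(2) big \<kappa>(2)] by (simp add: nw_def A_def)
  moreover have "\<kappa> * (sk / 2)^2 / (4 * (real k * A)) \<le> \<kappa> * nw^2 / (4 * (real k * A))"
    using nw sk R \<kappa>(1) A k by (intro divide_right_mono mult_left_mono power_mono) (auto simp: sk_def)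
  moreover have "sk^2 = real k powr (2 * (c + 1/2))"
    using k by (simp add: sk_def powr_power)
  hence "sk^2 = real k * real k powr (2 * c)"
    using k by (simp add: powr_add algebra_simps)
  hence "\<kappa> * (sk / 2)^2 / (4 * (real k * A)) = \<kappa> / (16 * A) * real k powr (2 * c)"
    using k A by (simp add: power_divide)
  ultimately show ?thesis by (simp add: A_def)
qed

lemma ln_wt_tail_decay:
  assumes c: "0 < c" and R: "R \<ge> 0"
  shows "\<exists>\<eta>>0. eventually (\<lambda>k. \<forall>z0\<in>lat k. \<forall>z\<in>lat k. norm (vr z0 - real k *\<^sub>R m) \<le> R \<longrightarrow>
     norm (dev k z) \<ge> real k powr c \<longrightarrow> ln (wt r v a k z) - ln (wt r v a k z0) \<le> - \<eta> * real k powr (2*c)) sequentially"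
proof (cases "I = {}")
  case True
  have "eventually (\<lambda>k. \<forall>z0\<in>lat k. \<forall>z\<in>lat k. norm (vr z0 - real k *\<^sub>R m) \<le> R \<longrightarrow>
     norm (dev k z) \<ge> real k powr c \<longrightarrow> ln (wt r v a k z) - ln (wt r v a k z0) \<le> - 1 * real k powr (2*c)) sequentially"
    using eventually_gt_at_top[of 0]
  proof eventually_elim
    case (elim k)
    have "dev k z = 0" if "z \<in> lat k" for z
      using L_eq_zero_if_I_empty[OF True] dev_in_L elim that by blast
    thus ?case using elim by auto
  qed
  thus ?thesis by (intro exI[of _ 1]) auto
next
  case False
  obtain \<kappa> where \<kappa>: "\<kappa> > 0" "\<forall>u\<in>L. qform u \<ge> \<kappa> * (norm u)^2" using qform_coercive by auto
  have "eventually (\<lambda>k. \<forall>i\<in>I. real k * slack i m \<ge> 2 * (norm (vr (v i)) * R + 1)) sequentially"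
  proof (rule eventually_ball_finite[OF finite_I], intro ballI)
    fix i assume i: "i \<in> I"
    show "eventually (\<lambda>k. real k * slack i m \<ge> 2 * (norm (vr (v i)) * R + 1)) sequentially"
      using eventually_real_ge[of "2 * (norm (vr (v i)) * R + 1) / slack i m"]
      by eventually_elim (use slack_m_pos[OF i] in \<open>simp add: pos_divide_le_eq\<close>)
  qed
  moreover have "eventually (\<lambda>k. real k powr (c + 1/2) \<ge> max (2 * R) (8 * tail_const R * total_slack / \<kappa>))
      sequentially"
    using c by (intro eventually_powr_ge) auto
  ultimately have "eventually (\<lambda>k. \<forall>z0\<in>lat k. \<forall>z\<in>lat k. norm (vr z0 - real k *\<^sub>R m) \<le> R \<longrightarrow>
     norm (dev k z) \<ge> real k powr c \<longrightarrow>
       ln (wt r v a k z) - ln (wt r v a k z0) \<le> - (\<kappa> / (16 * total_slack)) * real k powr (2*c)) sequentially"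
    using eventually_gt_at_top[of 0]
    by eventually_elim (blast intro: ln_wt_far_from_center[OF _ False R \<kappa>])
  thus ?thesis using \<kappa>(1) total_slack_pos[OF False] by (intro exI[of _ "\<kappa> / (16 * total_slack)"]) simp
qed

end

lemma abs_diff_le_of_abs_ln_diff_le:
  assumes w: "(w::real) > 0" and q: "q > 0" and ln: "\<bar>ln w - ln q\<bar> \<le> e"
  shows "\<bar>w - q\<bar> \<le> w * (exp e - 1)"
proof -
  define t where "t = ln w - ln q"
  have "\<bar>1 - exp (- t)\<bar> \<le> exp \<bar>t\<bar> - 1"
  proof (cases "t \<ge> 0")
    case True
    have "exp (- t) \<ge> 1 - t" "t \<le> exp t - 1"
      using exp_ge_add_one_self[of "- t"] exp_ge_add_one_self[of t] by linarith+
    moreover have "exp (- t) \<le> 1" using True by simp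
    ultimately show ?thesis using True by simp
  qed simp
  also have "\<dots> \<le> exp e - 1" using ln by (simp add: t_def)
  finally have "w * \<bar>1 - exp (- t)\<bar> \<le> w * (exp e - 1)" using w by (intro mult_left_mono) auto
  moreover have "q = w * exp (- t)" using w q by (simp add: t_def exp_diff)
  hence "w - q = w * (1 - exp (- t))" by (simp add: algebra_simps)
  hence "\<bar>w - q\<bar> = w * \<bar>1 - exp (- t)\<bar>" using w by (simp add: abs_mult)
  ultimately show ?thesis by simp
qed

lemma abs_sum_diff_le_of_ln_close:
  fixes w q f :: "'a \<Rightarrow> real"
  assumes w: "\<And>z. z \<in> S \<Longrightarrow> w z > 0" and q: "\<And>z. z \<in> S \<Longrightarrow> q z > 0"
    and close: "\<And>z. z \<in> S \<Longrightarrow> \<bar>ln (w z) - ln (q z)\<bar> \<le> \<epsilon>" and f: "\<And>z. \<bar>f z\<bar> \<le> B"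
  shows "\<bar>\<Sum>z\<in>S. (w z - q z) * f z\<bar> \<le> B * (exp \<epsilon> - 1) * (\<Sum>z\<in>S. w z)"
proof -
  have "\<bar>\<Sum>z\<in>S. (w z - q z) * f z\<bar> \<le> (\<Sum>z\<in>S. (w z * (exp \<epsilon> - 1)) * B)"
  proof (intro order_trans[OF sum_abs] sum_mono)
    fix z assume z: "z \<in> S"
    have "\<bar>w z - q z\<bar> \<le> w z * (exp \<epsilon> - 1)"
      using z by (intro abs_diff_le_of_abs_ln_diff_le w q close)
    thus "\<bar>(w z - q z) * f z\<bar> \<le> (w z * (exp \<epsilon> - 1)) * B"
      unfolding abs_mult using f by (intro mult_mono) auto
  qed
  thus ?thesis by (simp add: sum_distrib_right sum_distrib_left mult_ac)
qed

lemma weighted_average_perturbation: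
  fixes w q f :: "'a \<Rightarrow> real"
  assumes fin: "finite Z" and S: "S \<subseteq> Z"
    and w: "\<And>z. z \<in> Z \<Longrightarrow> w z > 0" and q: "\<And>z. z \<in> S \<Longrightarrow> q z > 0"
    and close: "\<And>z. z \<in> S \<Longrightarrow> \<bar>ln (w z) - ln (q z)\<bar> \<le> \<epsilon>"
    and tail: "\<And>z. z \<in> Z - S \<Longrightarrow> w z \<le> (\<Sum>z\<in>Z. w z) * E"
    and f: "\<And>z. \<bar>f z\<bar> \<le> B" and "\<epsilon> \<ge> 0" "E \<ge> 0"
  shows "\<bar>(\<Sum>z\<in>Z. w z * f z) / (\<Sum>z\<in>Z. w z) - (\<Sum>z\<in>S. q z * f z) / (\<Sum>z\<in>Z. w z)\<bar>
    \<le> B * ((exp \<epsilon> - 1) + real (card Z) * E)"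
proof -
  define W where "W = (\<Sum>z\<in>Z. w z)"
  have B: "B \<ge> 0" using f[of undefined] by linarith
  have W: "W \<ge> 0" unfolding W_def using w by (intro sum_nonneg) (auto intro: less_imp_le)
  have "\<bar>\<Sum>z\<in>Z - S. w z * f z\<bar> \<le> (\<Sum>z\<in>Z - S. (W * E) * B)"
  proof (intro order_trans[OF sum_abs] sum_mono)
    fix z assume z: "z \<in> Z - S"
    have "\<bar>w z\<bar> \<le> W * E" using w[of z] tail[OF z] z unfolding W_def by simp
    thus "\<bar>w z * f z\<bar> \<le> (W * E) * B"
      unfolding abs_mult using f by (intro mult_mono) auto
  qed
  also have "\<dots> \<le> real (card Z) * (W * E * B)"
    using fin W \<open>E \<ge> 0\<close> B by (simp add: card_mono mult_right_mono)
  finally have tail_part: "\<bar>\<Sum>z\<in>Z - S. w z * f z\<bar> \<le> B * (W * (real (card Z) * E))"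
    by (simp add: algebra_simps)
  have "(\<Sum>z\<in>S. w z) \<le> W"
    unfolding W_def using fin S w by (intro sum_mono2) (auto intro: less_imp_le)
  have "\<bar>\<Sum>z\<in>S. (w z - q z) * f z\<bar> \<le> B * (exp \<epsilon> - 1) * (\<Sum>z\<in>S. w z)"
    by (rule abs_sum_diff_le_of_ln_close) (use S w q close f in auto)
  also have "\<dots> \<le> B * (exp \<epsilon> - 1) * W"
    using \<open>(\<Sum>z\<in>S. w z) \<le> W\<close> B \<open>\<epsilon> \<ge> 0\<close> by (intro mult_left_mono) auto
  finally have core_part: "\<bar>\<Sum>z\<in>S. (w z - q z) * f z\<bar> \<le> B * (W * (exp \<epsilon> - 1))"
    by (simp add: mult_ac)
  have "(\<Sum>z\<in>Z. w z * f z) - (\<Sum>z\<in>S. q z * f z)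
      = (\<Sum>z\<in>Z - S. w z * f z) + (\<Sum>z\<in>S. (w z - q z) * f z)"
    using sum.subset_diff[OF S fin, of "\<lambda>z. w z * f z"]
    by (simp add: sum_subtractf left_diff_distrib)
  hence "\<bar>(\<Sum>z\<in>Z. w z * f z) - (\<Sum>z\<in>S. q z * f z)\<bar> \<le> W * (B * ((exp \<epsilon> - 1) + real (card Z) * E))"
    using tail_part core_part abs_triangle_ineq[of "\<Sum>z\<in>Z - S. w z * f z" "\<Sum>z\<in>S. (w z - q z) * f z"]
    by (simp add: algebra_simps)
  moreover have "B * ((exp \<epsilon> - 1) + real (card Z) * E) \<ge> 0"
    using B \<open>\<epsilon> \<ge> 0\<close> \<open>E \<ge> 0\<close> by simp
  ultimately show ?thesis
    using W unfolding W_def[symmetric] diff_divide_distrib[symmetric] abs_divide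
    by (cases "W = 0") (auto simp: pos_divide_le_eq mult.commute)
qed

lemma poly_times_exp_neg_powr_tendsto_0:
  fixes \<eta> c B :: real and n :: nat
  assumes \<eta>: "\<eta> > 0" and c: "c > 0" and B: "B \<ge> 0"
  shows "(\<lambda>k. (2 * real k * B + 3) ^ n * exp (- \<eta> * real k powr (2 * c))) \<longlonglongrightarrow> 0"
proof -
  define \<alpha> where "\<alpha> = real n * (2 * B + 3) powr c / c"
  have ev: "eventually (\<lambda>k. (2 * real k * B + 3) ^ n * exp (- \<eta> * real k powr (2 * c)) \<le> real k powr (- c)) sequentially"
    using eventually_gt_at_top[of 0] eventually_powr_ge[OF c, of "(\<alpha> + 1) / \<eta>"]
  proof eventually_elim
    case (elim k)
    define y where "y = real k powr c"
    have y: "y > 0" using elim by (simp add: y_def)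
    have y_big: "\<eta> * y \<ge> \<alpha> + 1" using elim \<eta> by (simp add: y_def pos_divide_le_eq mult.commute)
    have x1: "2 * real k * B + 3 \<ge> 1" using B by simp
    \<comment> \<open>\<open>ln x \<le> x\<^sup>c / c\<close> turns the polynomial factor into \<open>exp (\<alpha> y)\<close>\<close>
    have "ln (2 * real k * B + 3) \<le> (2 * real k * B + 3) powr c / c" by (rule ln_powr_bound[OF x1 c])
    also have "\<dots> \<le> ((2 * B + 3) * real k) powr c / c"
      using c B elim by (intro divide_right_mono powr_mono2) (auto simp: algebra_simps mult_right_mono)
    also have "\<dots> = (2 * B + 3) powr c * y / c" using B by (simp add: powr_mult y_def)
    finally have "real n * ln (2 * real k * B + 3) \<le> \<alpha> * y"
      by (simp add: \<alpha>_def) (metis mult_left_mono of_nat_0_le_iff times_divide_eq_right mult.assoc)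
    moreover have "\<eta> * (y * y) \<ge> (\<alpha> + 1) * y" using y_big y by (simp add: mult.assoc[symmetric] mult_right_mono)
    moreover have "(2 * real k * B + 3) ^ n * exp (- \<eta> * real k powr (2 * c))
        = exp (real n * ln (2 * real k * B + 3) - \<eta> * (y * y))"
      using x1 by (simp add: exp_diff exp_of_nat_mult y_def powr_add[symmetric] divide_inverse exp_minus)
    ultimately have "(2 * real k * B + 3) ^ n * exp (- \<eta> * real k powr (2 * c)) \<le> exp (- y)"
      by (simp add: algebra_simps)
    also have "exp (- y) \<le> 1 / y"
    proof -
      have "y \<le> exp y" using exp_ge_add_one_self[of y] by linarith
      thus ?thesis using y by (simp add: exp_minus field_simps)
    qed
    also have "\<dots> = real k powr (- c)" by (simp add: y_def powr_minus divide_inverse)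
    finally show ?case .
  qed
  have lim: "(\<lambda>k. real k powr (- c)) \<longlonglongrightarrow> 0"
    using c by (intro tendsto_neg_powr filterlim_real_sequentially) auto
  have "eventually (\<lambda>k. 0 \<le> (2 * real k * B + 3) ^ n * exp (- \<eta> * real k powr (2 * c))) sequentially"
    using B by (intro always_eventually) simp
  from tendsto_sandwich[OF this ev tendsto_const lim] show ?thesis .
qed

context lattice_polytope begin

lemma card_lat_times_exp_tendsto_0:
  assumes "\<eta> > 0" "c > 0"
  shows "(\<lambda>k. real (card (lat k)) * exp (- \<eta> * real k powr (2 * c))) \<longlonglongrightarrow> 0"
proof -
  obtain B where B: "B \<ge> 0" "\<forall>y\<in>P. norm y \<le> B" using P_norm_bound by auto
  have ev: "eventually (\<lambda>k. real (card (lat k)) * exp (- \<eta> * real k powr (2 * c))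
      \<le> (2 * real k * B + 3) ^ CARD('n) * exp (- \<eta> * real k powr (2 * c))) sequentially"
    using eventually_gt_at_top[of 0]
  proof eventually_elim
    case (elim k)
    define M where "M = nat \<lceil>real k * B\<rceil>"
    have "card (lat k) \<le> card (int_box M :: (int ^ 'n) set)"
      using lat_subset_int_box[OF B(2) elim] finite_int_box by (intro card_mono) (auto simp: M_def)
    also have "\<dots> \<le> (2 * M + 1) ^ CARD('n)" by (rule card_int_box_le)
    finally have "real (card (lat k)) \<le> real ((2 * M + 1) ^ CARD('n))"
      by (simp only: of_nat_le_iff)
    also have "\<dots> = (2 * real M + 1) ^ CARD('n)" by (simp add: add.commute)
    also have "\<dots> \<le> (2 * real k * B + 3) ^ CARD('n)"
    proof (rule power_mono)
      have "real M \<le> real k * B + 1" unfolding M_def using B by (simp add: of_nat_nat)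
      thus "2 * real M + 1 \<le> 2 * real k * B + 3" by simp
    qed simp
    finally show ?case by (intro mult_right_mono) auto
  qed
  have "eventually (\<lambda>k. 0 \<le> real (card (lat k)) * exp (- \<eta> * real k powr (2 * c))) sequentially"
    by (intro always_eventually) simp
  from tendsto_sandwich[OF this ev tendsto_const poly_times_exp_neg_powr_tendsto_0[OF assms B(1)]]
  show ?thesis .
qed

definition near_center :: "real \<Rightarrow> nat \<Rightarrow> (int ^ 'n) set" where
  "near_center R k = {z \<in> lat k. norm (vr z - real k *\<^sub>R m) \<le> R}"

lemma near_center_nonempty:
  assumes R: "\<forall>u\<in>L. \<exists>l::int^'n. vr l \<in> L \<and> norm (u - vr l) \<le> R"
  shows "eventually (\<lambda>k. lat k \<noteq> {} \<longrightarrow> near_center R k \<noteq> {}) sequentially"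
proof -
  obtain \<delta> where \<delta>: "\<delta> > 0" "\<forall>u\<in>L. norm u \<le> \<delta> \<longrightarrow> m + u \<in> P" using ball_L_in_P by auto
  show ?thesis using eventually_gt_at_top[of 0] eventually_real_ge[of "R / \<delta>"]
  proof eventually_elim
    case (elim k)
    show ?case
    proof
      assume "lat k \<noteq> {}"
      then obtain y where y: "y \<in> lat k" by auto
      \<comment> \<open>correct \<open>y\<close> by a lattice vector of \<open>L\<close> close to \<open>k m - y \<in> L\<close>\<close>
      define u where "u = real k *\<^sub>R m - vr y"
      have "u \<in> L" using lat_diff_center_in_L[OF elim(1) y] subspace_L
        by (simp add: u_def subspace_neg[of L "vr y - real k *\<^sub>R m", simplified])
      then obtain l where l: "vr l \<in> L" "norm (u - vr l) \<le> R" using R by blast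
      have e: "vr (y + l) - real k *\<^sub>R m = vr l - u" by (simp add: u_def vr_add)
      have "vr (y + l) - real k *\<^sub>R m \<in> L"
        unfolding e using l(1) \<open>u \<in> L\<close> subspace_diff[OF subspace_L] by blast
      moreover have "norm (vr (y + l) - real k *\<^sub>R m) \<le> R"
        unfolding e using l(2) by (simp add: norm_minus_commute)
      moreover have "R \<le> real k * \<delta>" using elim \<delta>(1) by (simp add: pos_divide_le_eq)
      ultimately show "near_center R k \<noteq> {}"
        using mem_lat_near_center[OF elim(1) \<delta>(2)] by (force simp: near_center_def)
    qed
  qed
qed

lemma near_center_subset_core:
  assumes "c > 0"
  shows "eventually (\<lambda>k. near_center R k \<subseteq> core c k) sequentially"
proof -
  have "c + 1/2 > 0" using assms by simp
  from eventually_gt_at_top[of 0] eventually_powr_ge[OF this, of "R + 1"]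
  show ?thesis
  proof eventually_elim
    case (elim k)
    show ?case
    proof
      fix z assume "z \<in> near_center R k"
      hence z: "z \<in> lat k" "norm (vr z - real k *\<^sub>R m) \<le> R" by (auto simp: near_center_def)
      have "sqrt (real k) * norm (dev k z) = norm (vr z - real k *\<^sub>R m)"
        using vr_diff_center_eq_dev[OF elim(1), of z] by simp
      also have "\<dots> < sqrt (real k) * real k powr c"
        using z elim by (simp add: sqrt_mult_powr)
      finally have "sqrt (real k) * norm (dev k z) < sqrt (real k) * real k powr c" .
      moreover have "sqrt (real k) > 0" using elim(1) by simp
      ultimately show "z \<in> core c k" using dev_in_L[OF elim(1) z(1)] by (simp add: core_def)
    qed
  qed
qed

lemma rho_int_eq:
  assumes k: "k > 0" and z0: "z0 \<in> lat k"
    and d: "d k = (\<Sum>z\<in>lat k. wt r v a k z) * gauss_wt r v a (dev k z0) / wt r v a k z0"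
  shows "rho_int r v a c d k f
    = (\<Sum>z\<in>core c k. (wt r v a k z0 * gauss_wt r v a (dev k z) / gauss_wt r v a (dev k z0)) * f (dev k z))
      / (\<Sum>z\<in>lat k. wt r v a k z)"
proof -
  define W where "W = (\<Sum>z\<in>lat k. wt r v a k z)"
  define g where "g x = gauss_wt r v a x" for x
  have g: "g x > 0" for x by (simp add: g_def gauss_wt_def)
  have "W > 0"
    unfolding W_def using wt_pos[OF k] z0 finite_lat by (intro sum_pos2[of _ z0]) (auto intro: less_imp_le)
  have "rho_int r v a c d k f = (1 / d k) * (\<Sum>z\<in>core c k. g (dev k z) * f (dev k z))"
    unfolding rho_int_def rho_supp_eq_dev_core[OF k] sum.reindex[OF inj_on_dev[OF k]] by (simp add: g_def)
  also have "\<dots> = (\<Sum>z\<in>core c k. (wt r v a k z0 * g (dev k z) / g (dev k z0)) * f (dev k z)) / W"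
    unfolding d W_def[symmetric] g_def[symmetric] sum_distrib_left sum_divide_distrib
    using g \<open>W > 0\<close> wt_pos[OF k z0] by (intro sum.cong) (auto simp: field_simps)
  finally show ?thesis by (simp add: W_def g_def)
qed

lemma nu_rho_diff_le:
  assumes k: "k > 0" and core: "core c k \<subseteq> lat k" and z0: "z0 \<in> core c k"
    and close: "\<forall>z\<in>core c k. \<bar>ln (wt r v a k z) - ln (wt r v a k z0)
       - (ln (gauss_wt r v a (dev k z)) - ln (gauss_wt r v a (dev k z0)))\<bar> \<le> \<epsilon>"
    and tail: "\<forall>z\<in>lat k. norm (dev k z) \<ge> real k powr c
       \<longrightarrow> ln (wt r v a k z) - ln (wt r v a k z0) \<le> - \<eta> * real k powr (2*c)"
    and f: "\<forall>x. \<bar>f x\<bar> \<le> B"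
    and d: "d k = (\<Sum>z\<in>lat k. wt r v a k z) * gauss_wt r v a (dev k z0) / wt r v a k z0"
  shows "\<bar>nu_int r v a k f - rho_int r v a c d k f\<bar>
     \<le> B * ((exp \<epsilon> - 1) + real (card (lat k)) * exp (- \<eta> * real k powr (2 * c)))"
proof -
  define w where "w z = wt r v a k z" for z
  define g where "g x = gauss_wt r v a x" for x
  define q where "q z = w z0 * g (dev k z) / g (dev k z0)" for z
  define E where "E = exp (- \<eta> * real k powr (2 * c))"
  have z0_lat: "z0 \<in> lat k" using z0 core by auto
  have w: "w z > 0" if "z \<in> lat k" for z using wt_pos[OF k that] by (simp add: w_def)
  have g: "g x > 0" for x by (simp add: g_def gauss_wt_def)
  have "w z \<le> (\<Sum>z\<in>lat k. w z) * E" if z: "z \<in> lat k - core c k" for z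
  proof -
    have "norm (dev k z) \<ge> real k powr c" using z dev_in_L[OF k] by (auto simp: core_def)
    hence "ln (w z) - ln (w z0) \<le> - \<eta> * real k powr (2*c)" using tail z by (simp add: w_def)
    hence "ln (w z) \<le> ln (w z0 * E)"
      using w[OF z0_lat] by (simp add: E_def ln_mult)
    hence "w z \<le> w z0 * E" using w[OF z0_lat] w z by (simp add: E_def)
    also have "\<dots> \<le> (\<Sum>z\<in>lat k. w z) * E"
      using z0_lat w finite_lat by (intro mult_right_mono member_le_sum) (auto simp: E_def less_imp_le)
    finally show ?thesis .
  qed
  moreover have "\<bar>ln (w z) - ln (q z)\<bar> \<le> \<epsilon>" if "z \<in> core c k" for z
    using close that w[OF z0_lat] g[of "dev k z"] g[of "dev k z0"]
    by (simp add: q_def w_def g_def ln_mult ln_div algebra_simps)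
  moreover have "\<epsilon> \<ge> 0" using close z0 by force
  ultimately have "\<bar>(\<Sum>z\<in>lat k. w z * f (dev k z)) / (\<Sum>z\<in>lat k. w z)
      - (\<Sum>z\<in>core c k. q z * f (dev k z)) / (\<Sum>z\<in>lat k. w z)\<bar>
    \<le> B * ((exp \<epsilon> - 1) + real (card (lat k)) * E)"
    using f w g z0_lat
    by (intro weighted_average_perturbation finite_lat core) (auto simp: q_def E_def)
  thus ?thesis
    using rho_int_eq[where d = d and f = f, OF k z0_lat d] by (simp add: nu_int_def dev_def w_def q_def g_def E_def)
qed

definition ref_point :: "real \<Rightarrow> nat \<Rightarrow> int ^ 'n" where
  "ref_point R k = (SOME z. z \<in> near_center R k)"

definition rho_norm :: "real \<Rightarrow> nat \<Rightarrow> real" where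
  "rho_norm R k = (if k > 0 \<and> near_center R k \<noteq> {}
     then (\<Sum>z\<in>lat k. wt r v a k z) * gauss_wt r v a (dev k (ref_point R k)) / wt r v a k (ref_point R k)
     else 1)"

lemma ref_point_mem: "near_center R k \<noteq> {} \<Longrightarrow> ref_point R k \<in> near_center R k"
  unfolding ref_point_def by (metis ex_in_conv someI_ex)

lemma rho_norm_pos: "rho_norm R k > 0"
proof (cases "k > 0 \<and> near_center R k \<noteq> {}")
  case True
  hence z: "ref_point R k \<in> lat k" and k: "k > 0"
    using ref_point_mem near_center_def by auto
  have "wt r v a k (ref_point R k) \<le> (\<Sum>z\<in>lat k. wt r v a k z)"
    using z wt_pos[OF k] finite_lat by (intro member_le_sum) (auto intro: less_imp_le)
  thus ?thesis using True wt_pos[OF k z] by (simp add: rho_norm_def gauss_wt_def)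
qed (auto simp: rho_norm_def)

lemma nu_rho_diff_eventually_le:
  assumes c: "0 < c" "c < 1/6" and R: "\<forall>u\<in>L. \<exists>l::int^'n. vr l \<in> L \<and> norm (u - vr l) \<le> R"
    and tail: "eventually (\<lambda>k. \<forall>z0\<in>lat k. \<forall>z\<in>lat k.
      norm (vr z0 - real k *\<^sub>R m) \<le> R \<longrightarrow> norm (dev k z) \<ge> real k powr c
      \<longrightarrow> ln (wt r v a k z) - ln (wt r v a k z0) \<le> - \<eta> * real k powr (2*c)) sequentially"
    and B: "\<forall>x. \<bar>f x\<bar> \<le> B"
  shows "eventually (\<lambda>k. norm (nu_int r v a k f - rho_int r v a c (rho_norm R) k f)
    \<le> B * ((exp (gauss_err c k) - 1) + real (card (lat k)) * exp (- \<eta> * real k powr (2 * c)))) sequentially"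
proof -
  have "c < 1/2" using c by simp
  from eventually_gt_at_top[of 0] core_subset_lat[OF this] near_center_nonempty[OF R]
    near_center_subset_core[OF c(1), of R] ln_wt_gauss_close[OF c] tail
  show ?thesis
  proof eventually_elim
    case (elim k)
    show ?case
    proof (cases "lat k = {}")
      case True
      thus ?thesis using elim B[rule_format, of 0] gauss_err_nonneg[of c k]
        by (simp add: nu_int_def rho_int_def rho_supp_eq_dev_core)
    next
      case False
      hence "near_center R k \<noteq> {}" using elim by blast
      hence "ref_point R k \<in> core c k" "ref_point R k \<in> lat k"
        "norm (vr (ref_point R k) - real k *\<^sub>R m) \<le> R"
        using ref_point_mem elim by (auto simp: near_center_def)
      thus ?thesis using elim B \<open>near_center R k \<noteq> {}\<close>
        by (simp only: real_norm_def) (intro nu_rho_diff_le; simp add: rho_norm_def)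
    qed
  qed
qed

theorem nu_rho_diff_tendsto_0:
  assumes c: "0 < c" "c < 1/6"
  obtains d :: "nat \<Rightarrow> real" where "\<And>k. d k > 0"
    "\<And>f. bounded (range f) \<Longrightarrow> (\<lambda>k. nu_int r v a k f - rho_int r v a c d k f) \<longlonglongrightarrow> 0"
proof -
  obtain R where R: "R \<ge> 0" "\<forall>u\<in>L. \<exists>l::int^'n. vr l \<in> L \<and> norm (u - vr l) \<le> R"
    using L_int_points_dense by auto
  obtain \<eta> where \<eta>: "\<eta> > 0" and tail: "eventually (\<lambda>k. \<forall>z0\<in>lat k. \<forall>z\<in>lat k.
      norm (vr z0 - real k *\<^sub>R m) \<le> R \<longrightarrow> norm (dev k z) \<ge> real k powr c
      \<longrightarrow> ln (wt r v a k z) - ln (wt r v a k z0) \<le> - \<eta> * real k powr (2*c)) sequentially"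
    using ln_wt_tail_decay[OF c(1) R(1)] by auto
  have "(\<lambda>k. nu_int r v a k f - rho_int r v a c (rho_norm R) k f) \<longlonglongrightarrow> 0" if "bounded (range f)" for f
  proof -
    obtain B where B: "\<forall>x. \<bar>f x\<bar> \<le> B" using \<open>bounded (range f)\<close> unfolding bounded_iff by auto
    have "(\<lambda>k. B * ((exp (gauss_err c k) - 1) + real (card (lat k)) * exp (- \<eta> * real k powr (2 * c))))
        \<longlonglongrightarrow> B * ((exp 0 - 1) + 0)"
      using gauss_err_tendsto_0[OF c(2)] card_lat_times_exp_tendsto_0[OF \<eta> c(1)]
      by (intro tendsto_intros)
    thus ?thesis by (intro Lim_null_comparison[OF nu_rho_diff_eventually_le[OF c R(2) tail B]]) simp
  qed
  thus ?thesis using that rho_norm_pos by blast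
qed

end

theorem mainTheorem4:
  fixes v :: "nat \<Rightarrow> int ^ 'n::finite" and a :: "nat \<Rightarrow> int" and r :: nat and c :: real
  assumes "(\<Sum>i<r. v i) = 0"
    and "compact (polyP r v a)"
    and "\<forall>i<r. \<exists>x\<in>polyP r v a. inner (vr (v i)) x + real_of_int (a i) = 0"
    and "0 < c" and "c < 1/6"
  shows "\<exists>d :: nat \<Rightarrow> real. (\<forall>k. d k > 0) \<and>
           (\<forall>f :: real ^ 'n \<Rightarrow> real. continuous_on UNIV f \<and> bounded (range f) \<longrightarrow>
              (\<lambda>k. nu_int r v a k f - rho_int r v a c d k f) \<longlonglongrightarrow> 0)"
proof -
  interpret lattice_polytope r v a
    using assms(1-3) by unfold_locales
  obtain d where "\<And>k. d k > 0"
    "\<And>f. bounded (range f) \<Longrightarrow> (\<lambda>k. nu_int r v a k f - rho_int r v a c d k f) \<longlonglongrightarrow> 0"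
    using nu_rho_diff_tendsto_0[OF assms(4,5)] by blast
  thus ?thesis by blast
qed

end
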